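(* Let $\delta>0$ and $0<c<\rho(1/\delta)$. Then there is $q_0=q_0(\delta,c)$ such that for every prime $q\ge q_0$ and all integers $0 \leq d_1 \leq d_2 \leq cq$ satisfying $n^{d_2} \equiv n^{d_1} \pmod{q}$ for all integers $1 \leq n \leq q^\delta$, we have $d_1 = d_2$.
   Context: $\rho$ is the Dickman–de Bruijn function: the unique continuous solution of $u\rho'(u)+\rho(u-1)=0$ for $u>1$ with $\rho(u)=1$ on $[0,1]$. *)

theory Defs
  imports "HOL-Analysis.Analysis" "HOL-Number_Theory.Number_Theory"
begin

text \<open>Characterisation of the Dickman--de Bruijn function: continuous on [0,\<infinity>),
  equal to 1 on [0,1], and u \<rho>'(u) + \<rho>(u-1) = 0 for u > 1.
  By convention we set \<rho>(u) = 0 for u < 0 (irrelevant for the statement).\<close>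
definition is_dickman :: "(real \<Rightarrow> real) \<Rightarrow> bool" where
  "is_dickman f \<longleftrightarrow>
     continuous_on {0..} f \<and>
     (\<forall>u. 0 \<le> u \<and> u \<le> 1 \<longrightarrow> f u = 1) \<and>
     (\<forall>u. u < 0 \<longrightarrow> f u = 0) \<and>
     (\<forall>u>1. \<exists>D. (f has_real_derivative D) (at u) \<and> u * D + f (u - 1) = 0)"

definition dickman_rho :: "real \<Rightarrow> real" where
  "dickman_rho = (THE f. is_dickman f)"

end

theory Submission
  imports Defs
begin

(*
  Suppose d1 < d2 and n^d2 = n^d1 (mod q) for all n <= q^delta.  Every n < q whose prime
  factors are all at most q^delta is then a root of X^(d2 - d1) - 1 in the field Z/q, and
  there are at most d2 - d1 <= c q such roots.  But the number Psi(q - 1, q^delta) of these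
  smooth numbers is asymptotic to rho(1/delta) q > c q.

  The asymptotic formula Psi(x, x^(1/u)) ~ rho(u) x is proved by induction on the integer part
  of u.  Chebyshev's bound and Legendre's formula give Mertens' estimate
  sum_{p <= t} ln p / p = ln t + O(1), so that the primes in (x^(1/s'), x^(1/s)] have
  reciprocal sum about ln(s'/s).  Buchstab's identity
  floor x = Psi(x, y) + sum_{y < p <= x} Psi(x/p, p)
  together with the formula for exponents up to u - 1, uniformly in the exponent, then turns
  Psi(x, x^(1/u)) into a Riemann sum for 1 - rho(u) = integral_1^u rho(t - 1) / t dt.  Comparing
  it with that integral needs rho to be nonincreasing on [0, u], which follows from rho >= 0 on
  [0, u - 1], itself a consequence of the asymptotic formula.
*)

section \<open>The Dickman function\<close>

text \<open>The \<open>n\<close>-th iterate of the integral equation \<open>\<rho>(u) = 1 - \<integral>\<^sub>1\<^sup>u \<rho>(t - 1) / t dt\<close>;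
  it is already exact on \<open>(-\<infinity>, n + 1]\<close>.\<close>
fun dickman_iter :: "nat \<Rightarrow> real \<Rightarrow> real" where
  "dickman_iter 0 = (\<lambda>u. if u < 0 then 0 else 1)"
| "dickman_iter (Suc n) = (\<lambda>u. if u \<le> 1 then (if u < 0 then 0 else 1)
       else 1 - integral {1..u} (\<lambda>t. dickman_iter n (t - 1) / t))"

lemma dickman_iter_Suc_gt_1:
  "u > 1 \<Longrightarrow> dickman_iter (Suc n) u = 1 - integral {1..u} (\<lambda>t. dickman_iter n (t - 1) / t)"
  by simp

lemma dickman_iter_le_1: "u \<le> 1 \<Longrightarrow> dickman_iter n u = (if u < 0 then 0 else 1)"
  by (cases n) auto

lemma dickman_iter_Suc_eq: "u \<le> real n + 1 \<Longrightarrow> dickman_iter (Suc n) u = dickman_iter n u"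
proof (induction n arbitrary: u)
  case 0
  then show ?case by (simp add: dickman_iter_le_1)
next
  case (Suc n)
  show ?case
  proof (cases "u \<le> 1")
    case True
    then show ?thesis by (simp add: dickman_iter_le_1 del: dickman_iter.simps)
  next
    case False
    have "integral {1..u} (\<lambda>t. dickman_iter (Suc n) (t - 1) / t)
        = integral {1..u} (\<lambda>t. dickman_iter n (t - 1) / t)"
      by (rule integral_cong) (use Suc in \<open>auto simp del: dickman_iter.simps\<close>)
    then show ?thesis using False by (simp only: dickman_iter_Suc_gt_1 not_le)
  qed
qed

lemma dickman_iter_eq:
  assumes "u \<le> real n + 1" "n \<le> m"
  shows "dickman_iter m u = dickman_iter n u"
  using assms(2)
proof (induction m rule: dec_induct)
  case (step m)
  then show ?case using assms(1) by (simp add: dickman_iter_Suc_eq del: dickman_iter.simps)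
qed simp

lemma continuous_on_dickman_iter_integrand:
  assumes "continuous_on {0..real n + 1} (dickman_iter n)"
  shows "continuous_on {1..real n + 2} (\<lambda>t. dickman_iter n (t - 1) / t)"
proof (intro continuous_intros)
  show "continuous_on {1..real n + 2} (\<lambda>t. dickman_iter n (t - 1))"
    by (rule continuous_on_compose2[OF assms]) (auto intro: continuous_on_diff)
qed auto

lemma continuous_on_dickman_iter: "continuous_on {0..real n + 1} (dickman_iter n)"
proof (induction n)
  case 0
  show ?case by (rule continuous_on_eq[of _ "\<lambda>u. 1"]) auto
next
  case (Suc n)
  define h where "h = (\<lambda>t. dickman_iter n (t - 1) / t)"
  have integral_cont: "continuous_on {1..real n + 2} (\<lambda>v. integral {1..v} h)"
    unfolding h_def
    by (intro indefinite_integral_continuous_1 integrable_continuous_real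
        continuous_on_dickman_iter_integrand Suc.IH)
  then have "continuous_on {0..real (Suc n) + 1} (\<lambda>u. 1 - integral {1..max 1 u} h)"
    by (intro continuous_intros continuous_on_compose2[OF integral_cont]) auto
  then show ?case
  proof (rule continuous_on_eq)
    fix u assume "u \<in> {0..real (Suc n) + 1}"
    then show "1 - integral {1..max 1 u} h = dickman_iter (Suc n) u"
      by (cases "u \<le> 1")
         (simp_all add: max_def h_def dickman_iter_le_1 dickman_iter_Suc_gt_1 del: dickman_iter.simps)
  qed
qed

lemma dickman_iter_has_derivative:
  assumes "1 < u" "u < real n + 2"
  shows "(dickman_iter (Suc n) has_real_derivative - (dickman_iter n (u - 1) / u)) (at u)"
proof -
  define h where "h = (\<lambda>t. dickman_iter n (t - 1) / t)"
  have "((\<lambda>v. integral {1..v} h) has_real_derivative h u) (at u within {1..real n + 2})"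
    unfolding h_def
    by (rule integral_has_real_derivative
        [OF continuous_on_dickman_iter_integrand[OF continuous_on_dickman_iter]])
       (use assms in auto)
  moreover have "at u within {1..real n + 2} = at u"
    by (rule at_within_interior) (use assms in auto)
  ultimately have "((\<lambda>v. integral {1..v} h) has_real_derivative h u) (at u)"
    by simp
  then have "((\<lambda>v. 1 - integral {1..v} h) has_real_derivative 0 - h u) (at u)"
    by (rule DERIV_diff[OF DERIV_const])
  then have "((\<lambda>v. 1 - integral {1..v} h) has_real_derivative - (dickman_iter n (u - 1) / u)) (at u)"
    by (simp add: h_def)
  then show ?thesis
    by (rule has_field_derivative_transform_within_open[where S = "{1<..}"])
       (use assms in \<open>auto simp: h_def dickman_iter_Suc_gt_1 simp del: dickman_iter.simps\<close>)
qed

definition dickman_limit :: "real \<Rightarrow> real" where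
  "dickman_limit u = dickman_iter (nat \<lceil>u\<rceil>) u"

lemma dickman_limit_eq_iter:
  assumes u: "u \<le> real m + 1"
  shows "dickman_limit u = dickman_iter m u"
proof (cases "nat \<lceil>u\<rceil> \<le> m")
  case True
  have "u \<le> real (nat \<lceil>u\<rceil>) + 1" by linarith
  from dickman_iter_eq[OF this True] show ?thesis by (simp add: dickman_limit_def)
next
  case False
  then have "m \<le> nat \<lceil>u\<rceil>" by linarith
  from dickman_iter_eq[OF u this] show ?thesis by (simp add: dickman_limit_def)
qed

lemma continuous_on_dickman_limit: "continuous_on {0..} dickman_limit"
  unfolding continuous_on_eq_continuous_within
proof
  fix x :: real assume x: "x \<in> {0..}"
  define m where "m = nat \<lceil>x\<rceil> + 1"
  have xm: "x < real m + 1" unfolding m_def by linarith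
  have "continuous_on {0..real m + 1} dickman_limit"
    by (rule continuous_on_eq[OF continuous_on_dickman_iter]) (auto simp: dickman_limit_eq_iter)
  then have "continuous (at x within {0..real m + 1}) dickman_limit"
    using x xm by (simp add: continuous_on_eq_continuous_within)
  moreover have "at x within {0..} = at x within {0..real m + 1}"
    by (rule at_within_nhd[of _ "{..<real m + 1}"]) (use xm in auto)
  ultimately show "continuous (at x within {0..}) dickman_limit" by simp
qed

lemma is_dickman_dickman_limit: "is_dickman dickman_limit"
  unfolding is_dickman_def
proof (intro conjI allI impI continuous_on_dickman_limit)
  fix u :: real assume "0 \<le> u \<and> u \<le> 1"
  then show "dickman_limit u = 1" using dickman_limit_eq_iter[of u 0] by simp
next
  fix u :: real assume "u < 0"
  then show "dickman_limit u = 0" using dickman_limit_eq_iter[of u 0] by simp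
next
  fix u :: real assume u: "u > 1"
  define m where "m = nat \<lceil>u\<rceil>"
  have um: "u < real m + 2" unfolding m_def by linarith
  have "(dickman_iter (Suc m) has_real_derivative - (dickman_iter m (u - 1) / u)) (at u)"
    using u um by (intro dickman_iter_has_derivative) auto
  then have "(dickman_limit has_real_derivative - (dickman_iter m (u - 1) / u)) (at u)"
    by (rule has_field_derivative_transform_within_open[where S = "{..<real m + 2}"])
       (use um dickman_limit_eq_iter[of _ "Suc m"] in \<open>auto simp del: dickman_iter.simps\<close>)
  moreover have "dickman_iter m (u - 1) = dickman_limit (u - 1)"
    using um dickman_limit_eq_iter[of "u - 1" m] by simp
  ultimately show "\<exists>D. (dickman_limit has_real_derivative D) (at u) \<and> u * D + dickman_limit (u - 1) = 0"
    using u by (intro exI[of _ "- (dickman_limit (u - 1) / u)"]) auto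
qed

lemma is_dickman_has_derivative:
  assumes "is_dickman f" "u > 1"
  shows "(f has_real_derivative - (f (u - 1) / u)) (at u)"
proof -
  obtain D where D: "(f has_real_derivative D) (at u)" "u * D + f (u - 1) = 0"
    using assms unfolding is_dickman_def by blast
  then have "D = - (f (u - 1) / u)" using assms(2) by (simp add: field_simps)
  then show ?thesis using D by simp
qed

lemma is_dickman_eq_on_initial_segments:
  assumes f: "is_dickman f" and g: "is_dickman g"
  shows "u \<le> real n + 1 \<Longrightarrow> f u = g u"
proof (induction n arbitrary: u)
  case 0
  then show ?case using f g unfolding is_dickman_def by (metis not_le of_nat_0 add_0)
next
  case (Suc n)
  show ?case
  proof (cases "u \<le> real n + 1")
    case True
    then show ?thesis using Suc.IH by blast
  next
    case False
    let ?h = "\<lambda>v. f v - g v"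
    have "continuous_on {0..} ?h"
      using f g unfolding is_dickman_def by (auto intro!: continuous_intros)
    then have "continuous_on {real n + 1..u} ?h"
      by (rule continuous_on_subset) auto
    then have "?h u = ?h (real n + 1)"
    proof (rule DERIV_isconst_end[rotated])
      fix x assume x: "real n + 1 < x" "x < u"
      have "(?h has_real_derivative - (f (x - 1) / x) - - (g (x - 1) / x)) (at x)"
        using x by (intro derivative_intros is_dickman_has_derivative f g) auto
      moreover have "f (x - 1) = g (x - 1)" using Suc x by (intro Suc.IH) auto
      ultimately show "(?h has_real_derivative 0) (at x)" by simp
    qed (use False in auto)
    then show ?thesis using Suc.IH[of "real n + 1"] by simp
  qed
qed

lemma is_dickman_unique:
  assumes "is_dickman f" "is_dickman g"
  shows "f = g"
proof
  fix u :: real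
  have "u \<le> real (nat \<lceil>u\<rceil>) + 1" by linarith
  then show "f u = g u" by (rule is_dickman_eq_on_initial_segments[OF assms])
qed

lemma is_dickman_dickman_rho: "is_dickman dickman_rho"
proof -
  have "dickman_rho = dickman_limit"
    unfolding dickman_rho_def
    by (rule the_equality) (auto intro: is_dickman_dickman_limit is_dickman_unique)
  then show ?thesis using is_dickman_dickman_limit by simp
qed

lemma dickman_rho_eq_1: "0 \<le> u \<Longrightarrow> u \<le> 1 \<Longrightarrow> dickman_rho u = 1"
  using is_dickman_dickman_rho unfolding is_dickman_def by blast

lemma continuous_on_dickman_rho: "continuous_on {0..} dickman_rho"
  using is_dickman_dickman_rho unfolding is_dickman_def by blast

lemma dickman_rho_has_derivative:
  "u > 1 \<Longrightarrow> (dickman_rho has_real_derivative - (dickman_rho (u - 1) / u)) (at u)"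
  by (rule is_dickman_has_derivative[OF is_dickman_dickman_rho])

lemma dickman_rho_antimono:
  assumes nonneg: "\<And>v. 0 \<le> v \<Longrightarrow> v \<le> V \<Longrightarrow> 0 \<le> dickman_rho v"
    and ab: "0 \<le> a" "a \<le> b" "b \<le> V + 1"
  shows "dickman_rho b \<le> dickman_rho a"
proof (cases "b \<le> 1")
  case True
  then show ?thesis using ab dickman_rho_eq_1 by simp
next
  case False
  have "dickman_rho b \<le> dickman_rho (max a 1)"
  proof (rule DERIV_nonpos_imp_decreasing_open[where f = dickman_rho])
    show "continuous_on {max a 1..b} dickman_rho"
      by (rule continuous_on_subset[OF continuous_on_dickman_rho]) auto
    fix x assume x: "max a 1 < x" "x < b"
    show "\<exists>y. (dickman_rho has_real_derivative y) (at x) \<and> y \<le> 0"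
      using x ab nonneg[of "x - 1"] dickman_rho_has_derivative[of x] by auto
  qed (use False ab in auto)
  moreover have "dickman_rho (max a 1) = dickman_rho a"
    using ab dickman_rho_eq_1 by (cases "a \<le> 1") auto
  ultimately show ?thesis by simp
qed

lemma dickman_rho_bounds:
  assumes nonneg: "\<And>v. 0 \<le> v \<Longrightarrow> v \<le> V \<Longrightarrow> 0 \<le> dickman_rho v" and v: "0 \<le> v" "v \<le> V"
  shows "0 \<le> dickman_rho v" "dickman_rho v \<le> 1"
  using nonneg[OF v] dickman_rho_antimono[OF nonneg, where a = 0 and b = v] v dickman_rho_eq_1[of 0]
  by auto

text \<open>One step of a Riemann sum for \<open>1 - \<rho>(u) = \<integral>\<^sub>1\<^sup>u \<rho>(t - 1) / t dt\<close>: the integrand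
  is nonincreasing where \<open>\<rho>\<close> is nonnegative.\<close>
lemma dickman_rho_decrement_bounds:
  assumes nonneg: "\<And>v. 0 \<le> v \<Longrightarrow> v \<le> s' - 1 \<Longrightarrow> 0 \<le> dickman_rho v"
    and s: "1 \<le> s" "s < s'"
  shows "(s' - s) * (dickman_rho (s' - 1) / s') \<le> dickman_rho s - dickman_rho s'"
    and "dickman_rho s - dickman_rho s' \<le> (s' - s) * (dickman_rho (s - 1) / s)"
proof -
  let ?g = "\<lambda>t. dickman_rho (t - 1) / t"
  have g_antimono: "?g t' \<le> ?g t" if "1 \<le> t" "t \<le> t'" "t' \<le> s'" for t t'
  proof -
    have "dickman_rho (t' - 1) \<le> dickman_rho (t - 1)"
      using that by (intro dickman_rho_antimono[OF nonneg]) auto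
    moreover have "0 \<le> dickman_rho (t' - 1)" using that by (intro nonneg) auto
    ultimately show ?thesis using that by (simp add: frac_le)
  qed
  have "continuous_on {s..s'} dickman_rho"
    by (rule continuous_on_subset[OF continuous_on_dickman_rho]) (use s in auto)
  moreover have "dickman_rho differentiable (at z)" if "s < z" for z
    using dickman_rho_has_derivative[of z] s that real_differentiable_def by force
  ultimately obtain l z where z: "s < z" "z < s'" "(dickman_rho has_real_derivative l) (at z)"
      "dickman_rho s' - dickman_rho s = (s' - s) * l"
    using MVT[OF s(2)] by blast
  have "l = - ?g z" using DERIV_unique[OF z(3) dickman_rho_has_derivative] s z by simp
  then have "dickman_rho s - dickman_rho s' = (s' - s) * ?g z" using z(4) by simp
  moreover have "?g s' \<le> ?g z" "?g z \<le> ?g s" using z s by (auto intro!: g_antimono)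
  ultimately show "(s' - s) * ?g s' \<le> dickman_rho s - dickman_rho s'"
    and "dickman_rho s - dickman_rho s' \<le> (s' - s) * ?g s"
    using s mult_left_mono[of "?g s'" "?g z" "s' - s"] mult_left_mono[of "?g z" "?g s" "s' - s"]
    by simp_all
qed

lemma dickman_rho_riemann_sums:
  fixes u h :: real and K :: nat
  assumes u: "u > 1" and K: "K > 0" and h: "h = (u - 1) / real K"
    and nonneg: "\<And>v. 0 \<le> v \<Longrightarrow> v \<le> u - 1 \<Longrightarrow> 0 \<le> dickman_rho v"
  shows "1 - dickman_rho u - h \<le> (\<Sum>j<K. h * (dickman_rho (real (Suc j) * h) / (1 + real (Suc j) * h)))"
    and "(\<Sum>j<K. h * (dickman_rho (real j * h) / (1 + real j * h))) \<le> 1 - dickman_rho u + h"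
proof -
  define t where "t = (\<lambda>j::nat. 1 + real j * h)"
  define g where "g = (\<lambda>t. dickman_rho (t - 1) / t)"
  have h0: "h > 0" using u K h by simp
  have t_Suc: "t (Suc j) - t j = h" for j by (simp add: t_def algebra_simps)
  have hK: "h * real K = u - 1" using K h by simp
  then have t_K: "t K = u" by (simp add: t_def mult.commute)
  have t_le: "t j \<le> u" if "j \<le> K" for j
    using that h0 t_K unfolding t_def by (smt (verit) mult_right_mono of_nat_mono)
  have step: "h * g (t (Suc j)) \<le> dickman_rho (t j) - dickman_rho (t (Suc j))"
    "dickman_rho (t j) - dickman_rho (t (Suc j)) \<le> h * g (t j)" if "j < K" for j
    using dickman_rho_decrement_bounds[of "t (Suc j)" "t j"] t_le[of "Suc j"] that nonneg h0 t_Suc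
    unfolding g_def by (auto simp: t_def)
  have "(\<Sum>j<K. dickman_rho (t j) - dickman_rho (t (Suc j))) = 1 - dickman_rho u"
    using sum_lessThan_telescope'[of "\<lambda>j. dickman_rho (t j)" K] t_K dickman_rho_eq_1[of 1]
    by (simp add: t_def)
  moreover have "(\<Sum>j<K. h * g (t j)) - (\<Sum>j<K. h * g (t (Suc j))) = h * (1 - g u)"
    using sum_lessThan_telescope'[of "\<lambda>j. h * g (t j)" K] hK dickman_rho_eq_1[of 0]
    by (simp add: sum_subtractf t_def g_def algebra_simps)
  moreover have "0 \<le> g u" using nonneg[of "u - 1"] u by (simp add: g_def)
  then have "h * (1 - g u) \<le> h" using h0 by (simp add: algebra_simps)
  moreover have "(\<Sum>j<K. h * g (t (Suc j))) \<le> (\<Sum>j<K. dickman_rho (t j) - dickman_rho (t (Suc j)))"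
    and "(\<Sum>j<K. dickman_rho (t j) - dickman_rho (t (Suc j))) \<le> (\<Sum>j<K. h * g (t j))"
    by (intro sum_mono; use step in simp)+
  ultimately have "1 - dickman_rho u - h \<le> (\<Sum>j<K. h * g (t (Suc j)))"
    and "(\<Sum>j<K. h * g (t j)) \<le> 1 - dickman_rho u + h"
    by linarith+
  then show "1 - dickman_rho u - h \<le> (\<Sum>j<K. h * (dickman_rho (real (Suc j) * h) / (1 + real (Suc j) * h)))"
    and "(\<Sum>j<K. h * (dickman_rho (real j * h) / (1 + real j * h))) \<le> 1 - dickman_rho u + h"
    by (simp_all add: t_def g_def)
qed

section \<open>Chebyshev's bound and Mertens' theorem\<close>

lemma prod_primes_dvd:
  fixes n :: nat
  assumes "finite A" "\<And>p. p \<in> A \<Longrightarrow> prime p \<and> p dvd n"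
  shows "\<Prod>A dvd n"
  using assms
proof (induction A rule: finite_induct)
  case (insert p A)
  have p: "prime p" "p dvd n" using insert.prems by auto
  have "\<not> p dvd \<Prod>A"
  proof
    assume "p dvd \<Prod>A"
    then obtain q where "q \<in> A" "p dvd q" using prime_dvd_prod_iff[OF insert.hyps(1) p(1)] by auto
    then show False using insert.hyps(2) insert.prems p primes_dvd_imp_eq by blast
  qed
  then have "coprime p (\<Prod>A)" using p(1) prime_imp_coprime by blast
  then show ?case using divides_mult insert p(2) by auto
qed simp

lemma binomial_odd_middle_le_four_pow: "(2 * m + 1) choose m \<le> 4 ^ m"
proof -
  have "2 * ((2 * m + 1) choose m) = (\<Sum>k\<in>{m, m + 1}. (2 * m + 1) choose k)"
    using binomial_symmetric[of m "2 * m + 1"] by simp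
  also have "\<dots> \<le> (\<Sum>k\<le>2 * m + 1. (2 * m + 1) choose k)"
    by (rule sum_mono2) auto
  also have "\<dots> = 2 ^ (2 * m + 1)" by (rule choose_row_sum)
  also have "\<dots> = 2 * 4 ^ m" by (simp add: power_mult)
  finally show ?thesis by simp
qed

lemma prod_primes_between_dvd_binomial:
  "\<Prod>{p::nat. prime p \<and> m + 1 < p \<and> p \<le> 2 * m + 1} dvd (2 * m + 1) choose m"
proof (rule prod_primes_dvd)
  fix p assume "p \<in> {p::nat. prime p \<and> m + 1 < p \<and> p \<le> 2 * m + 1}"
  then have p: "prime p" "m + 1 < p" "p \<le> 2 * m + 1" by auto
  have "fact m * fact (m + 1) * ((2 * m + 1) choose m) = (fact (2 * m + 1) :: nat)"
    using binomial_fact_lemma[of m "2 * m + 1"] by (simp add: mult_2)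
  moreover have "p dvd fact (2 * m + 1)" "\<not> p dvd fact m * fact (m + 1)"
    using p by (auto simp: prime_dvd_fact_iff prime_dvd_mult_iff simp del: fact_Suc)
  ultimately have "p dvd (2 * m + 1) choose m"
    using prime_dvd_mult_iff[OF p(1)] by metis
  then show "prime p \<and> p dvd (2 * m + 1) choose m" using p by simp
qed (rule finite_subset[of _ "{..2 * m + 1}"], auto)

text \<open>Chebyshev: the primes in \<open>(m + 1, 2m + 1]\<close> divide \<open>(2m + 1 choose m) \<le> 4\<^sup>m\<close>.\<close>
lemma prod_primes_le_four_pow: "\<Prod>{p::nat. prime p \<and> p \<le> n} \<le> 4 ^ n"
proof (induction n rule: less_induct)
  case (less n)
  consider "n < 2" | "n = 2" | "n > 2" "even n" | m where "n = 2 * m + 1" "m \<ge> 1"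
    by (cases "n < 2"; cases "n = 2"; cases "even n") (auto elim!: oddE)
  then show ?case
  proof cases
    case 1
    then have primes: "{p::nat. prime p \<and> p \<le> n} = {}" by (auto dest: prime_ge_2_nat)
    show ?thesis unfolding primes by simp
  next
    case 2
    then have primes: "{p::nat. prime p \<and> p \<le> n} = {2}" by (auto dest: prime_ge_2_nat)
    show ?thesis unfolding primes using 2 by simp
  next
    case 3
    then have "\<not> prime n" using prime_odd_nat by blast
    then have "prime p \<and> p \<le> n \<longleftrightarrow> prime p \<and> p \<le> n - 1" for p
      by (cases "p = n") auto
    then have "\<Prod>{p::nat. prime p \<and> p \<le> n} = \<Prod>{p. prime p \<and> p \<le> n - 1}" by metis
    also have "\<dots> \<le> 4 ^ (n - 1)" using less[of "n - 1"] 3 by simp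
    also have "\<dots> \<le> 4 ^ n" by (rule power_increasing) simp_all
    finally show ?thesis .
  next
    case (4 m)
    let ?A = "{p::nat. prime p \<and> p \<le> m + 1}"
    let ?B = "{p::nat. prime p \<and> m + 1 < p \<and> p \<le> 2 * m + 1}"
    have "finite ?A" "finite ?B" by (auto intro: finite_subset[of _ "{..2 * m + 1}"])
    moreover have "{p::nat. prime p \<and> p \<le> n} = ?A \<union> ?B" using 4 by auto
    ultimately have "\<Prod>{p::nat. prime p \<and> p \<le> n} = \<Prod>?A * \<Prod>?B"
      by (simp add: prod.union_disjoint[symmetric] Int_def)
    also have "\<dots> \<le> 4 ^ (m + 1) * 4 ^ m"
    proof (rule mult_le_mono)
      show "\<Prod>?A \<le> 4 ^ (m + 1)" using less[of "m + 1"] 4 by simp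
      have "\<Prod>?B \<le> (2 * m + 1) choose m"
        by (rule dvd_imp_le[OF prod_primes_between_dvd_binomial]) (simp add: zero_less_binomial_iff)
      then show "\<Prod>?B \<le> 4 ^ m" using binomial_odd_middle_le_four_pow[of m] by linarith
    qed
    also have "\<dots> = 4 ^ n" using 4 by (simp flip: power_add)
    finally show ?thesis .
  qed
qed

lemma finite_primes_le: "finite {p::nat. prime p \<and> p \<le> n}"
  by (rule finite_subset[of _ "{..n}"]) auto

lemma sum_ln_primes_le: "(\<Sum>p | prime p \<and> p \<le> n. ln (real p)) \<le> real n * ln 4"
proof -
  have "(\<Sum>p | prime p \<and> p \<le> n. ln (real p)) = ln (\<Prod>p | prime p \<and> p \<le> n. real p)"
    by (rule ln_prod[symmetric]) (use finite_primes_le prime_gt_0_nat in auto)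
  also have "(\<Prod>p | prime p \<and> p \<le> n. real p) = real (\<Prod>{p::nat. prime p \<and> p \<le> n})"
    by simp
  also have "ln \<dots> \<le> ln (real (4 ^ n))"
    using prod_primes_le_four_pow[of n] prod_pos[of "{p::nat. prime p \<and> p \<le> n}" "\<lambda>p. p"]
    by (subst ln_le_cancel_iff) (auto simp: prime_gt_0_nat simp del: of_nat_prod of_nat_power)
  also have "\<dots> = real n * ln 4" by (simp add: ln_realpow)
  finally show ?thesis .
qed

lemma multiplicity_fact_rec:
  fixes p n :: nat
  assumes p: "prime p"
  shows "multiplicity p (fact n) = n div p + multiplicity p (fact (n div p))"
proof (induction n)
  case (Suc n)
  have p0: "p > 0" using p prime_gt_0_nat by auto
  have "(fact (Suc n) :: nat) = Suc n * fact n" by simp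
  then have fact_Suc: "multiplicity p (fact (Suc n)) = multiplicity p (Suc n) + multiplicity p (fact n)"
    using p by (simp only:) (rule prime_elem_multiplicity_mult_distrib; simp)
  show ?case
  proof (cases "p dvd Suc n")
    case False
    then have "Suc n div p = n div p" "multiplicity p (Suc n) = 0"
      by (simp_all add: div_Suc dvd_eq_mod_eq_0 not_dvd_imp_multiplicity_0)
    then show ?thesis using fact_Suc Suc.IH by simp
  next
    case True
    then obtain j where j: "Suc n = p * j" by (elim dvdE)
    have j0: "j \<ge> 1" using j by (cases j) auto
    have "Suc n div p = j" using j p0 by simp
    moreover have "Suc n mod p = 0" using True by simp
    then have "Suc n div p = Suc (n div p)" by (simp add: div_Suc)
    ultimately have "Suc n div p = j" "n div p = j - 1" by simp_all
    moreover have "multiplicity p (Suc n) = Suc (multiplicity p j)"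
      unfolding j by (rule multiplicity_times_same) (use p j0 prime_gt_1_nat[OF p] in simp_all)
    moreover have "multiplicity p (fact j :: nat) = multiplicity p j + multiplicity p (fact (j - 1) :: nat)"
      using j0 p fact_reduce[of j, where 'a = nat] by (simp add: prime_elem_multiplicity_mult_distrib)
    ultimately show ?thesis using fact_Suc Suc.IH j0 by simp
  qed
qed simp

lemma multiplicity_fact_ge:
  fixes p n :: nat
  assumes "prime p"
  shows "n div p \<le> multiplicity p (fact n)"
  using multiplicity_fact_rec[OF assms, of n] by simp

lemma multiplicity_fact_le:
  fixes p n :: nat
  assumes p: "prime p"
  shows "real (multiplicity p (fact n)) \<le> real n / (real p - 1)"
proof (induction n rule: less_induct)
  case (less n)
  have p2: "real p \<ge> 2" using prime_ge_2_nat[OF p] by simp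
  show ?case
  proof (cases "n = 0")
    case False
    define D where "D = real (n div p)"
    have "n div p < n" using False prime_ge_2_nat[OF p] by (intro div_less_dividend) auto
    then have IH: "real (multiplicity p (fact (n div p))) \<le> D / (real p - 1)"
      using less by (simp add: D_def)
    have "real p * D \<le> real n"
      unfolding D_def using times_div_less_eq_dividend[of p n] by (metis of_nat_le_iff of_nat_mult)
    then have D_le: "D \<le> real n / real p" using p2 by (simp add: field_simps)
    have "real (multiplicity p (fact n)) = D + real (multiplicity p (fact (n div p)))"
      using multiplicity_fact_rec[OF p, of n] by (simp add: D_def)
    also have "\<dots> \<le> D * real p / (real p - 1)" using IH p2 by (simp add: field_simps)
    also have "\<dots> \<le> (real n / real p) * real p / (real p - 1)"
      using D_le p2 by (intro divide_right_mono mult_right_mono) auto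
    also have "\<dots> = real n / (real p - 1)" using p2 by simp
    finally show ?thesis .
  qed simp
qed

lemma ln_fact_conv_sum_primes:
  "ln (fact n :: real) = (\<Sum>p | prime p \<and> p \<le> n. real (multiplicity p (fact n :: nat)) * ln (real p))"
proof -
  have "prime_factors (fact n :: nat) = {p. prime p \<and> p \<le> n}"
    unfolding prime_factors_fact using prime_ge_2_nat by auto
  then have "(fact n :: nat) = (\<Prod>p | prime p \<and> p \<le> n. p ^ multiplicity p (fact n :: nat))"
    using prime_factorization_nat[of "fact n"] by simp
  then have "ln (fact n :: real) = ln (\<Prod>p | prime p \<and> p \<le> n. real p ^ multiplicity p (fact n :: nat))"
    by (metis (no_types, lifting) of_nat_fact of_nat_power of_nat_prod prod.cong)
  also have "\<dots> = (\<Sum>p | prime p \<and> p \<le> n. ln (real p ^ multiplicity p (fact n :: nat)))"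
    by (rule ln_prod[OF finite_primes_le]) (simp add: prime_gt_0_nat)
  finally show ?thesis by (simp add: ln_realpow prime_gt_0_nat)
qed

lemma ln_fact_ge: "real n * ln (real n) - real n \<le> ln (fact n :: real)"
proof (cases "n = 0")
  case False
  let ?x = "real n"
  have exp_sums: "(\<lambda>k. ?x ^ k /\<^sub>R fact k) sums exp ?x" by (rule exp_converges)
  have "(\<Sum>k\<in>{n}. ?x ^ k /\<^sub>R fact k) \<le> (\<Sum>k. ?x ^ k /\<^sub>R fact k)"
    by (rule sum_le_suminf) (use exp_sums sums_summable in auto)
  then have "?x ^ n / fact n \<le> exp ?x"
    using sums_unique[OF exp_sums] by (simp add: divide_inverse mult.commute)
  then have "ln (?x ^ n / fact n) \<le> ?x"
    using False by (metis ln_exp ln_le_cancel_iff exp_gt_zero divide_pos_pos of_nat_0_less_iff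
        fact_gt_zero gr0I zero_less_power)
  then show ?thesis using False by (simp add: ln_div ln_realpow)
qed simp

lemma ln_fact_le: "ln (fact n :: real) \<le> real n * ln (real n)"
proof (cases "n = 0")
  case False
  have "(fact n :: real) \<le> real n ^ n" using fact_le_power[of n] by simp
  then have "ln (fact n :: real) \<le> ln (real n ^ n)" using False by simp
  then show ?thesis using False by (simp add: ln_realpow)
qed simp

text \<open>The second summand makes the bound inductive.\<close>
lemma sum_ln_div_plus_tail_le_2:
  "(\<Sum>k=2..Suc n. ln (real k) / (real k * (real k - 1))) + (ln (real (Suc n)) + 2) / real (Suc n) \<le> 2"
proof (induction n)
  case (Suc n)
  define N where "N = real (Suc n)"
  define a where "a = ln (N + 1)"
  define b where "b = ln N"
  have N1: "N \<ge> 1" unfolding N_def by simp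
  have "a - b = ln ((N + 1) / N)" using N1 by (simp add: a_def b_def ln_div)
  also have "\<dots> \<le> (N + 1) / N - 1" using N1 by (intro ln_le_minus_one) simp
  also have "\<dots> = 1 / N" using N1 by (simp add: field_simps)
  finally have "(N + 1) * (a - b) \<le> (N + 1) * (1 / N)"
    using N1 by (intro mult_left_mono) auto
  also have "\<dots> \<le> 2" using N1 by (simp add: field_simps)
  finally have key: "(N + 1) * (a - b) \<le> 2" .
  have "(a + 2) / (N + 1) = (N * (a + 2)) / ((N + 1) * N)" using N1 by simp
  then have "a / ((N + 1) * N) + (a + 2) / (N + 1) = (a + N * (a + 2)) / ((N + 1) * N)"
    by (simp add: add_divide_distrib)
  also have "\<dots> \<le> ((N + 1) * (b + 2)) / ((N + 1) * N)"
    using key N1 by (intro divide_right_mono) (auto simp: algebra_simps)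
  also have "\<dots> = (b + 2) / N" using N1 by simp
  finally have "a / ((N + 1) * N) + (a + 2) / (N + 1) \<le> (b + 2) / N" .
  moreover have "{2..Suc (Suc n)} = insert (Suc (Suc n)) {2..Suc n}" by auto
  ultimately show ?case using Suc.IH by (simp add: N_def a_def b_def add.commute)
qed simp

lemma sum_primes_ln_div_le_2:
  "(\<Sum>p | prime p \<and> p \<le> n. ln (real p) / (real p * (real p - 1))) \<le> 2"
proof (cases n)
  case (Suc m)
  have "(\<Sum>p | prime p \<and> p \<le> n. ln (real p) / (real p * (real p - 1)))
        \<le> (\<Sum>k=2..n. ln (real k) / (real k * (real k - 1)))"
    by (rule sum_mono2) (auto dest: prime_ge_2_nat intro!: divide_nonneg_nonneg)
  also have "\<dots> \<le> 2"
  proof -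
    have "0 \<le> (ln (real (Suc m)) + 2) / real (Suc m)" by (intro divide_nonneg_nonneg) auto
    then show ?thesis using sum_ln_div_plus_tail_le_2[of m] unfolding Suc by linarith
  qed
  finally show ?thesis .
qed simp

lemma ln_fact_le_sum_primes:
  "ln (fact n :: real) \<le> real n * (\<Sum>p | prime p \<and> p \<le> n. ln (real p) / real p)
     + real n * (\<Sum>p | prime p \<and> p \<le> n. ln (real p) / (real p * (real p - 1)))"
proof -
  have "ln (fact n :: real) \<le> (\<Sum>p | prime p \<and> p \<le> n.
      real n * (ln (real p) / real p) + real n * (ln (real p) / (real p * (real p - 1))))"
    unfolding ln_fact_conv_sum_primes
  proof (rule sum_mono)
    fix p assume "p \<in> {p. prime p \<and> p \<le> n}"
    then have p: "prime p" "real p \<ge> 2" using prime_ge_2_nat by auto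
    have "real (multiplicity p (fact n :: nat)) * ln (real p) \<le> (real n / (real p - 1)) * ln (real p)"
      using p by (intro mult_right_mono multiplicity_fact_le) auto
    also have "real n / (real p - 1) = real n / real p + real n / (real p * (real p - 1))"
      using p by (simp add: field_simps)
    finally show "real (multiplicity p (fact n :: nat)) * ln (real p)
        \<le> real n * (ln (real p) / real p) + real n * (ln (real p) / (real p * (real p - 1)))"
      by (simp add: algebra_simps)
  qed
  then show ?thesis by (simp add: sum.distrib sum_distrib_left)
qed

lemma ln_fact_ge_sum_primes:
  "real n * (\<Sum>p | prime p \<and> p \<le> n. ln (real p) / real p) - (\<Sum>p | prime p \<and> p \<le> n. ln (real p))
     \<le> ln (fact n :: real)"
proof -
  have "(\<Sum>p | prime p \<and> p \<le> n. real n * (ln (real p) / real p) - ln (real p)) \<le> ln (fact n :: real)"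
    unfolding ln_fact_conv_sum_primes
  proof (rule sum_mono)
    fix p assume "p \<in> {p. prime p \<and> p \<le> n}"
    then have p: "prime p" "real p \<ge> 2" using prime_ge_2_nat by auto
    have "real n < real p * real (n div p) + real p"
      using p(1) prime_gt_0_nat[OF p(1)]
      by (metis add.commute div_mult_mod_eq mod_less_divisor mult.commute nat_add_left_cancel_less
          of_nat_add of_nat_less_iff of_nat_mult)
    then have "real n / real p - 1 \<le> real (n div p)" using p by (simp add: field_simps)
    also have "\<dots> \<le> real (multiplicity p (fact n :: nat))" using multiplicity_fact_ge[OF p(1), of n] by simp
    finally have "(real n / real p - 1) * ln (real p) \<le> real (multiplicity p (fact n :: nat)) * ln (real p)"
      using p by (intro mult_right_mono) auto
    then show "real n * (ln (real p) / real p) - ln (real p) \<le> real (multiplicity p (fact n :: nat)) * ln (real p)"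
      by (simp add: algebra_simps)
  qed
  then show ?thesis by (simp add: sum_subtractf sum_distrib_left)
qed

lemma mertens_nat:
  assumes "n \<ge> 1"
  shows "(\<Sum>p | prime p \<and> p \<le> n. ln (real p) / real p) \<le> ln (real n) + 2"
    and "(\<Sum>p | prime p \<and> p \<le> n. ln (real p) / real p) \<ge> ln (real n) - 3"
proof -
  let ?A = "\<Sum>p | prime p \<and> p \<le> n. ln (real p) / real p"
  have n: "real n \<ge> 1" using assms by simp
  have "ln (4::real) = 2 * ln 2" using ln_realpow[of 2 2] by simp
  also have "\<dots> \<le> 2" using ln_le_minus_one[of 2] by simp
  finally have "real n * ln 4 \<le> real n * 2" using n by (intro mult_left_mono) auto
  then have "real n * ?A \<le> real n * (ln (real n) + 2)"
    using ln_fact_ge_sum_primes[of n] ln_fact_le[of n] sum_ln_primes_le[of n]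
    by (simp add: algebra_simps)
  then show "?A \<le> ln (real n) + 2" using n by simp
  have "real n * (\<Sum>p | prime p \<and> p \<le> n. ln (real p) / (real p * (real p - 1))) \<le> real n * 2"
    using sum_primes_ln_div_le_2 n by (intro mult_left_mono) auto
  then have "real n * ?A \<ge> real n * (ln (real n) - 3)"
    using ln_fact_le_sum_primes[of n] ln_fact_ge[of n] by (simp add: algebra_simps)
  then show "?A \<ge> ln (real n) - 3" using n by simp
qed

definition prime_sum :: "real \<Rightarrow> real \<Rightarrow> (nat \<Rightarrow> real) \<Rightarrow> real" where
  "prime_sum a b f = (\<Sum>p | prime p \<and> a < real p \<and> real p \<le> b. f p)"

lemma finite_primes_between: "finite {p::nat. prime p \<and> a < real p \<and> real p \<le> b}"
  by (rule finite_subset[of _ "{..nat \<lfloor>b\<rfloor>}"]) (auto simp: le_nat_floor)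

lemma prime_sum_split:
  assumes "a \<le> b" "b \<le> c"
  shows "prime_sum a c f = prime_sum a b f + prime_sum b c f"
proof -
  have primes: "{p::nat. prime p \<and> a < real p \<and> real p \<le> c} =
      {p. prime p \<and> a < real p \<and> real p \<le> b} \<union> {p. prime p \<and> b < real p \<and> real p \<le> c}"
    using assms by auto
  show ?thesis
    unfolding prime_sum_def primes
    by (rule sum.union_disjoint[OF finite_primes_between finite_primes_between]) auto
qed

lemma prime_sum_mono:
  "(\<And>p. prime p \<Longrightarrow> a < real p \<Longrightarrow> real p \<le> b \<Longrightarrow> f p \<le> g p) \<Longrightarrow> prime_sum a b f \<le> prime_sum a b g"
  unfolding prime_sum_def by (rule sum_mono) auto

lemma prime_sum_nonneg:
  "(\<And>p. prime p \<Longrightarrow> a < real p \<Longrightarrow> real p \<le> b \<Longrightarrow> 0 \<le> f p) \<Longrightarrow> 0 \<le> prime_sum a b f"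
  unfolding prime_sum_def by (rule sum_nonneg) auto

lemma prime_sum_cong:
  "(\<And>p. prime p \<Longrightarrow> a < real p \<Longrightarrow> real p \<le> b \<Longrightarrow> f p = g p) \<Longrightarrow> prime_sum a b f = prime_sum a b g"
  unfolding prime_sum_def by (rule sum.cong) auto

lemma prime_sum_add: "prime_sum a b (\<lambda>p. f p + g p) = prime_sum a b f + prime_sum a b g"
  unfolding prime_sum_def by (rule sum.distrib)

lemma prime_sum_diff: "prime_sum a b (\<lambda>p. f p - g p) = prime_sum a b f - prime_sum a b g"
  unfolding prime_sum_def by (rule sum_subtractf)

lemma prime_sum_cmult: "prime_sum a b (\<lambda>p. c * f p) = c * prime_sum a b f"
  unfolding prime_sum_def by (rule sum_distrib_left[symmetric])

lemma prime_sum_empty: "b \<le> a \<Longrightarrow> prime_sum a b f = 0"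
  unfolding prime_sum_def by (rule sum.neutral) auto

lemma prime_sum_telescope:
  assumes "\<And>j. e (Suc j) \<le> e j"
  shows "(\<Sum>j<K. prime_sum (e (Suc j)) (e j) f) = prime_sum (e K) (e 0) f"
proof (induction K)
  case (Suc K)
  have "e K \<le> e 0" using lift_Suc_antimono_le[of e 0 K] assms by auto
  then have "prime_sum (e (Suc K)) (e 0) f = prime_sum (e (Suc K)) (e K) f + prime_sum (e K) (e 0) f"
    by (rule prime_sum_split[OF assms])
  then show ?case using Suc.IH by simp
qed (simp add: prime_sum_empty)

lemma prime_sum_tail_le:
  assumes "\<And>p. a < real p \<Longrightarrow> 0 \<le> f p"
  shows "prime_sum y x (\<lambda>p. if a < real p then f p else 0) \<le> prime_sum a x f"
proof -
  have "prime_sum y x (\<lambda>p. if a < real p then f p else 0) = prime_sum (max y a) x f"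
    unfolding prime_sum_def by (rule sum.mono_neutral_cong_right) (auto simp: finite_primes_between)
  also have "\<dots> \<le> prime_sum a x f"
  proof (cases "max y a \<le> x")
    case True
    then have "prime_sum a x f = prime_sum a (max y a) f + prime_sum (max y a) x f"
      by (intro prime_sum_split) auto
    moreover have "0 \<le> prime_sum a (max y a) f" by (rule prime_sum_nonneg) (use assms in auto)
    ultimately show ?thesis by simp
  next
    case False
    then have "prime_sum (max y a) x f = 0" by (intro prime_sum_empty) linarith
    moreover have "0 \<le> prime_sum a x f" by (rule prime_sum_nonneg) (use assms in auto)
    ultimately show ?thesis by simp
  qed
  finally show ?thesis .
qed

lemma mertens:
  assumes t: "1 \<le> t"
  shows "\<bar>prime_sum 0 t (\<lambda>p. ln (real p) / real p) - ln t\<bar> \<le> 4"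
proof -
  define n where "n = nat \<lfloor>t\<rfloor>"
  have n: "n \<ge> 1" "real n \<le> t" "t < real n + 1" unfolding n_def using t by linarith+
  have "prime p \<and> 0 < real p \<and> real p \<le> t \<longleftrightarrow> prime p \<and> p \<le> n" for p :: nat
    using n prime_gt_0_nat[of p] unfolding n_def by linarith
  then have "prime_sum 0 t (\<lambda>p. ln (real p) / real p) = (\<Sum>p | prime p \<and> p \<le> n. ln (real p) / real p)"
    unfolding prime_sum_def by presburger
  moreover have "ln (real n) \<le> ln t" using n by simp
  moreover have "ln t \<le> ln (2 * real n)" using n by (subst ln_le_cancel_iff) auto
  then have "ln t \<le> 1 + ln (real n)" using n ln_le_minus_one[of 2] by (simp add: ln_mult)
  ultimately show ?thesis using mertens_nat[OF n(1)] by linarith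
qed

lemma prime_sum_ln_div_bounds:
  assumes "1 \<le> a" "a \<le> b"
  shows "\<bar>prime_sum a b (\<lambda>p. ln (real p) / real p) - (ln b - ln a)\<bar> \<le> 8"
  using prime_sum_split[of 0 a b] mertens[of a] mertens[of b] assms by simp

lemma prime_sum_inverse_le:
  assumes a: "1 < a" and ab: "a \<le> b"
  shows "prime_sum a b (\<lambda>p. 1 / real p) \<le> (ln b - ln a + 8) / ln a"
proof -
  have la: "ln a > 0" using a by simp
  have "prime_sum a b (\<lambda>p. 1 / real p) \<le> prime_sum a b (\<lambda>p. (1 / ln a) * (ln (real p) / real p))"
  proof (rule prime_sum_mono)
    fix p assume p: "prime p" "a < real p" "real p \<le> b"
    then have "1 \<le> ln (real p) / ln a" using a la by simp
    then show "1 / real p \<le> (1 / ln a) * (ln (real p) / real p)"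
      using mult_right_mono[of 1 "ln (real p) / ln a" "1 / real p"] by simp
  qed
  also have "\<dots> = (1 / ln a) * prime_sum a b (\<lambda>p. ln (real p) / real p)" by (rule prime_sum_cmult)
  also have "\<dots> \<le> (1 / ln a) * (ln b - ln a + 8)"
    using prime_sum_ln_div_bounds[of a b] a ab la by (intro mult_left_mono) auto
  finally show ?thesis by simp
qed

lemma prime_sum_inverse_ge:
  assumes a: "1 < a" and ab: "a \<le> b"
  shows "prime_sum a b (\<lambda>p. 1 / real p) \<ge> (ln b - ln a - 8) / ln b"
proof -
  have lb: "ln b > 0" using a ab by simp
  have "(1 / ln b) * (ln b - ln a - 8) \<le> (1 / ln b) * prime_sum a b (\<lambda>p. ln (real p) / real p)"
    using prime_sum_ln_div_bounds[of a b] a ab lb by (intro mult_left_mono) auto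
  also have "\<dots> = prime_sum a b (\<lambda>p. (1 / ln b) * (ln (real p) / real p))" by (rule prime_sum_cmult[symmetric])
  also have "\<dots> \<le> prime_sum a b (\<lambda>p. 1 / real p)"
  proof (rule prime_sum_mono)
    fix p assume p: "prime p" "a < real p" "real p \<le> b"
    then have "ln (real p) / ln b \<le> 1" using a lb by simp
    then show "(1 / ln b) * (ln (real p) / real p) \<le> 1 / real p"
      using mult_right_mono[of "ln (real p) / ln b" 1 "1 / real p"] by simp
  qed
  finally show ?thesis by simp
qed

lemma prime_sum_inverse_powr_bounds:
  assumes x: "x > 1" and s: "1 \<le> s" "s < s'"
  shows "prime_sum (x powr (1 / s')) (x powr (1 / s)) (\<lambda>p. 1 / real p) \<le> (s' - s) / s + 8 * s' / ln x"
    and "(s' - s) / s' - 8 * s / ln x \<le> prime_sum (x powr (1 / s')) (x powr (1 / s)) (\<lambda>p. 1 / real p)"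
proof -
  have L: "ln x > 0" using x by simp
  have a1: "x powr (1 / s') > 1" using x s by simp
  have ab: "x powr (1 / s') \<le> x powr (1 / s)" using x s by (simp add: frac_le)
  have ln_powr: "ln (x powr (1 / s')) = ln x / s'" "ln (x powr (1 / s)) = ln x / s"
    using x by (simp_all add: ln_powr)
  have "(ln x / s - ln x / s' + 8) / (ln x / s') = (s' - s) / s + 8 * s' / ln x"
    and "(ln x / s - ln x / s' - 8) / (ln x / s) = (s' - s) / s' - 8 * s / ln x"
    using L s by (simp_all add: field_simps)
  then show "prime_sum (x powr (1 / s')) (x powr (1 / s)) (\<lambda>p. 1 / real p) \<le> (s' - s) / s + 8 * s' / ln x"
    and "(s' - s) / s' - 8 * s / ln x \<le> prime_sum (x powr (1 / s')) (x powr (1 / s)) (\<lambda>p. 1 / real p)"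
    using prime_sum_inverse_le[OF a1 ab] prime_sum_inverse_ge[OF a1 ab] unfolding ln_powr by simp_all
qed

lemma prime_sum_block_bounds:
  assumes x: "x > 1" and s: "1 \<le> s" "s < s'" "s' \<le> u"
    and c: "0 \<le> c\<^sub>0" "0 \<le> c\<^sub>1"
    and F: "\<And>p. prime p \<Longrightarrow> x powr (1 / s') < real p \<Longrightarrow> real p \<le> x powr (1 / s) \<Longrightarrow>
      c\<^sub>0 / real p - G p \<le> F p \<and> F p \<le> c\<^sub>1 / real p + G p"
  shows "c\<^sub>0 * ((s' - s) / s' - 8 * u / ln x) - prime_sum (x powr (1 / s')) (x powr (1 / s)) G
      \<le> prime_sum (x powr (1 / s')) (x powr (1 / s)) F"
    and "prime_sum (x powr (1 / s')) (x powr (1 / s)) F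
      \<le> c\<^sub>1 * ((s' - s) / s + 8 * u / ln x) + prime_sum (x powr (1 / s')) (x powr (1 / s)) G"
proof -
  let ?S = "prime_sum (x powr (1 / s')) (x powr (1 / s))"
  have "8 * s / ln x \<le> 8 * u / ln x" "8 * s' / ln x \<le> 8 * u / ln x"
    using x s by (simp_all add: divide_right_mono)
  then have recip: "(s' - s) / s' - 8 * u / ln x \<le> ?S (\<lambda>p. 1 / real p)"
      "?S (\<lambda>p. 1 / real p) \<le> (s' - s) / s + 8 * u / ln x"
    using prime_sum_inverse_powr_bounds[OF x s(1,2)] by linarith+
  have "c\<^sub>0 * ((s' - s) / s' - 8 * u / ln x) - ?S G \<le> c\<^sub>0 * ?S (\<lambda>p. 1 / real p) - ?S G"
    using recip c by (simp add: mult_left_mono)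
  also have "\<dots> = ?S (\<lambda>p. c\<^sub>0 * (1 / real p) - G p)" by (simp only: prime_sum_diff prime_sum_cmult)
  also have "\<dots> \<le> ?S F" by (rule prime_sum_mono) (use F in auto)
  finally show "c\<^sub>0 * ((s' - s) / s' - 8 * u / ln x) - ?S G \<le> ?S F" .
  have "?S F \<le> ?S (\<lambda>p. c\<^sub>1 * (1 / real p) + G p)" by (rule prime_sum_mono) (use F in auto)
  also have "\<dots> = c\<^sub>1 * ?S (\<lambda>p. 1 / real p) + ?S G" by (simp only: prime_sum_add prime_sum_cmult)
  also have "\<dots> \<le> c\<^sub>1 * ((s' - s) / s + 8 * u / ln x) + ?S G"
    using recip c by (simp add: mult_left_mono)
  finally show "?S F \<le> c\<^sub>1 * ((s' - s) / s + 8 * u / ln x) + ?S G" .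
qed

lemma prime_sum_blocks_bounds:
  fixes x u h :: real and K :: nat and c\<^sub>0 c\<^sub>1 :: "nat \<Rightarrow> real"
  assumes x: "x > 1" and u: "u > 1" and K: "K > 0" and h: "h = (u - 1) / real K"
    and c: "\<And>j. j < K \<Longrightarrow> 0 \<le> c\<^sub>0 j \<and> 0 \<le> c\<^sub>1 j"
    and F: "\<And>j p. j < K \<Longrightarrow> prime p \<Longrightarrow> x powr (1 / (1 + real (Suc j) * h)) < real p \<Longrightarrow>
      real p \<le> x powr (1 / (1 + real j * h)) \<Longrightarrow> c\<^sub>0 j / real p - G p \<le> F p \<and> F p \<le> c\<^sub>1 j / real p + G p"
  shows "(\<Sum>j<K. c\<^sub>0 j * (h / (1 + real (Suc j) * h) - 8 * u / ln x)) - prime_sum (x powr (1 / u)) x G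
      \<le> prime_sum (x powr (1 / u)) x F"
    and "prime_sum (x powr (1 / u)) x F
      \<le> (\<Sum>j<K. c\<^sub>1 j * (h / (1 + real j * h) + 8 * u / ln x)) + prime_sum (x powr (1 / u)) x G"
proof -
  define e where "e = (\<lambda>j::nat. x powr (1 / (1 + real j * h)))"
  have h0: "h > 0" using u K h by simp
  have t: "1 \<le> 1 + real j * h" "1 + real j * h < 1 + real (Suc j) * h"
    "(1 + real (Suc j) * h) - (1 + real j * h) = h" for j
    using h0 by (auto simp: algebra_simps)
  have t_le: "1 + real (Suc j) * h \<le> u" if "j < K" for j
  proof -
    have "real (Suc j) * h \<le> real K * h" using that h0 by (intro mult_right_mono) auto
    then show ?thesis using K h by simp
  qed
  have "e (Suc j) \<le> e j" for j
    unfolding e_def using x t(1,2)[of j] by (intro powr_mono divide_left_mono mult_pos_pos) auto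
  moreover have "e 0 = x" "e K = x powr (1 / u)" using x K h by (simp_all add: e_def)
  ultimately have blocks: "prime_sum (x powr (1 / u)) x f = (\<Sum>j<K. prime_sum (e (Suc j)) (e j) f)" for f
    using prime_sum_telescope[where e = e and K = K and f = f] by simp
  have block: "c\<^sub>0 j * (h / (1 + real (Suc j) * h) - 8 * u / ln x) - prime_sum (e (Suc j)) (e j) G
      \<le> prime_sum (e (Suc j)) (e j) F"
    "prime_sum (e (Suc j)) (e j) F \<le> c\<^sub>1 j * (h / (1 + real j * h) + 8 * u / ln x) + prime_sum (e (Suc j)) (e j) G"
    if "j < K" for j
    using prime_sum_block_bounds[OF x t(1,2) t_le[OF that] c[OF that, THEN conjunct1]
        c[OF that, THEN conjunct2] F[OF that]]
    unfolding t(3) e_def by blast+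
  show "(\<Sum>j<K. c\<^sub>0 j * (h / (1 + real (Suc j) * h) - 8 * u / ln x)) - prime_sum (x powr (1 / u)) x G
      \<le> prime_sum (x powr (1 / u)) x F"
    unfolding blocks sum_subtractf[symmetric] by (rule sum_mono) (use block in auto)
  show "prime_sum (x powr (1 / u)) x F
      \<le> (\<Sum>j<K. c\<^sub>1 j * (h / (1 + real j * h) + 8 * u / ln x)) + prime_sum (x powr (1 / u)) x G"
    unfolding blocks sum.distrib[symmetric] by (rule sum_mono) (use block in auto)
qed

lemma eventually_ln_ge: "eventually (\<lambda>x::real. C \<le> ln x) at_top"
  using ln_at_top unfolding filterlim_at_top by blast

lemma eventually_prime_sum_inverse_le:
  assumes "u \<ge> 1"
  shows "eventually (\<lambda>x. prime_sum (x powr (1 / u)) x (\<lambda>p. 1 / real p) \<le> u) at_top"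
  using eventually_ln_ge[of "8 * u"] eventually_gt_at_top[of 1]
proof eventually_elim
  case (elim x)
  have "prime_sum (x powr (1 / u)) x (\<lambda>p. 1 / real p) \<le> (ln x - ln (x powr (1 / u)) + 8) / ln (x powr (1 / u))"
    using elim assms by (intro prime_sum_inverse_le) (auto simp: powr_le_cancel_iff[of x "1 / u" 1, simplified])
  also have "\<dots> = u - 1 + 8 * u / ln x" using elim assms by (simp add: ln_powr field_simps)
  also have "8 * u / ln x \<le> 1" using elim assms by (simp add: divide_le_eq)
  finally show ?case by simp
qed

lemma eventually_prime_sum_inverse_tail_le:
  assumes "X0 \<ge> 1" "\<epsilon> > 0"
  shows "eventually (\<lambda>x. prime_sum (x / X0) x (\<lambda>p. 1 / real p) \<le> \<epsilon>) at_top"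
  using eventually_ln_ge[of "ln X0 + (ln X0 + 8) / \<epsilon> + 1"] eventually_gt_at_top[of 0]
proof eventually_elim
  case (elim x)
  have lnX0: "0 \<le> ln X0" using assms by simp
  then have "0 \<le> (ln X0 + 8) / \<epsilon>" using assms by simp
  then have ln_x: "ln x - ln X0 > 0" "(ln X0 + 8) / \<epsilon> \<le> ln x - ln X0"
    using elim(1) by linarith+
  have ln_div_X0: "ln (x / X0) = ln x - ln X0" using elim assms by (simp add: ln_div)
  have "X0 < x" using ln_less_cancel_iff[of X0 x] ln_x(1) elim(2) assms(1) by auto
  then have "1 < x / X0" using assms by simp
  then have "prime_sum (x / X0) x (\<lambda>p. 1 / real p) \<le> (ln x - ln (x / X0) + 8) / ln (x / X0)"
    using assms by (intro prime_sum_inverse_le) (auto simp: field_simps)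
  also have "\<dots> = (ln X0 + 8) / (ln x - ln X0)" unfolding ln_div_X0 by simp
  also have "\<dots> \<le> \<epsilon>" using ln_x assms(2) by (simp add: divide_le_eq pos_divide_le_eq mult.commute)
  finally show ?case .
qed

section \<open>Smooth numbers and Buchstab's identity\<close>

definition smooth :: "real \<Rightarrow> nat \<Rightarrow> bool" where
  "smooth y n \<longleftrightarrow> (\<forall>p. prime p \<and> p dvd n \<longrightarrow> real p \<le> y)"

definition Psi :: "real \<Rightarrow> real \<Rightarrow> nat" where
  "Psi x y = card {n::nat. 1 \<le> n \<and> real n \<le> x \<and> smooth y n}"

lemma positive_le_real_eq_atLeastAtMost: "{n::nat. 1 \<le> n \<and> real n \<le> x} = {1..nat \<lfloor>x\<rfloor>}"
  by (auto simp: le_nat_floor) linarith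

lemma finite_positive_le_real: "finite {n::nat. 1 \<le> n \<and> real n \<le> x \<and> P n}"
  by (rule finite_subset[of _ "{1..nat \<lfloor>x\<rfloor>}"]) (use positive_le_real_eq_atLeastAtMost in blast, simp)

lemma abs_nat_floor_diff_le: "x \<ge> 0 \<Longrightarrow> \<bar>real (nat \<lfloor>x\<rfloor>) - x\<bar> \<le> 1"
  by (simp add: of_nat_floor) linarith

lemma Psi_le: "x \<ge> 0 \<Longrightarrow> real (Psi x y) \<le> x"
proof -
  assume x: "x \<ge> 0"
  have "Psi x y \<le> card {n::nat. 1 \<le> n \<and> real n \<le> x}"
    unfolding Psi_def by (rule card_mono) (use finite_positive_le_real[of x "\<lambda>_. True"] in auto)
  then have "real (Psi x y) \<le> real (nat \<lfloor>x\<rfloor>)"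
    unfolding positive_le_real_eq_atLeastAtMost by simp
  also have "\<dots> \<le> x" using x by (simp add: of_nat_floor)
  finally show ?thesis .
qed

lemma Psi_mono: "y \<le> y' \<Longrightarrow> Psi x y \<le> Psi x y'"
  unfolding Psi_def
  by (rule card_mono[OF finite_positive_le_real]) (auto simp: smooth_def)

lemma Psi_eq_floor:
  assumes "x \<le> y"
  shows "Psi x y = nat \<lfloor>x\<rfloor>"
proof -
  have "smooth y n" if "1 \<le> n" "real n \<le> x" for n
    unfolding smooth_def
  proof (intro allI impI)
    fix p assume "prime p \<and> p dvd n"
    then have "p \<le> n" using that by (intro dvd_imp_le) auto
    then show "real p \<le> y" using that assms by linarith
  qed
  then have "{n::nat. 1 \<le> n \<and> real n \<le> x \<and> smooth y n} = {1..nat \<lfloor>x\<rfloor>}"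
    using positive_le_real_eq_atLeastAtMost by blast
  then show ?thesis unfolding Psi_def by simp
qed

lemma smooth_largest_prime_factor_unique:
  assumes "prime p" "prime p'" "smooth (real p) m" "smooth (real p') m'" "p * m = p' * m'"
  shows "p = p'"
proof -
  have le: "q' \<le> q"
    if "prime q" "prime q'" "smooth (real q) k" "q * k = q' * k'" for q q' k k'
  proof (cases "q' = q")
    case False
    have "q' dvd q * k" using that(4) by simp
    moreover have "\<not> q' dvd q" using that(1,2) False primes_dvd_imp_eq by blast
    ultimately have "q' dvd k" using prime_dvd_mult_iff[OF that(2)] by blast
    then show ?thesis using that(2,3) unfolding smooth_def by auto
  qed simp
  show ?thesis using le[OF assms(1,2,3,5)] le[OF assms(2,1,4) assms(5)[symmetric]] by simp
qed

lemma not_smooth_decompose: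
  fixes n :: nat
  assumes "n \<ge> 1" "\<not> smooth y n"
  obtains p m where "prime p" "y < real p" "p \<le> n" "n = p * m" "smooth (real p) m"
proof -
  define p where "p = Max (prime_factors n)"
  obtain q where q: "prime q" "q dvd n" "\<not> real q \<le> y" using assms(2) unfolding smooth_def by auto
  have q_in: "q \<in> prime_factors n" using q assms(1) by (simp add: in_prime_factors_iff)
  then have p_in: "p \<in> prime_factors n" unfolding p_def using Max_in by blast
  have p_max: "r \<le> p" if "prime r" "r dvd n" for r
    unfolding p_def using that assms(1) by (intro Max_ge) (auto simp: in_prime_factors_iff)
  have p: "prime p" "p dvd n" using p_in by (auto simp: in_prime_factors_iff)
  then obtain m where m: "n = p * m" by (elim dvdE)
  show thesis
  proof (rule that[OF p(1) _ _ m])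
    show "y < real p" using p_max[OF q(1,2)] q(3) by linarith
    show "p \<le> n" using p assms(1) by (intro dvd_imp_le) auto
    show "smooth (real p) m" unfolding smooth_def using p_max m by auto
  qed
qed

text \<open>\<open>p\<close> is the largest prime factor of \<open>p m\<close>.\<close>
lemma not_smooth_eq_Union:
  "{n::nat. 1 \<le> n \<and> real n \<le> x \<and> \<not> smooth y n} =
     (\<Union>p \<in> {p. prime p \<and> y < real p \<and> real p \<le> x}.
        (\<lambda>m. p * m) ` {m. 1 \<le> m \<and> real m \<le> x / real p \<and> smooth (real p) m})"
  (is "?N = (\<Union>p\<in>?P. ?M p)")
proof (intro equalityI subsetI)
  fix n assume "n \<in> ?N"
  then have n: "1 \<le> n" "real n \<le> x" "\<not> smooth y n" by auto
  obtain p m where p: "prime p" "y < real p" "p \<le> n" "n = p * m" "smooth (real p) m"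
    using not_smooth_decompose[OF n(1,3)] .
  have "real p * real m \<le> x" using n(2) p(4) by simp
  then have "real m \<le> x / real p" using prime_gt_0_nat[OF p(1)] by (simp add: field_simps)
  moreover have "1 \<le> m" using n(1) p(4) by (cases m) auto
  moreover have "real p \<le> x" using n(2) p(3) by linarith
  ultimately show "n \<in> (\<Union>p\<in>?P. ?M p)" using p by blast
next
  fix n assume "n \<in> (\<Union>p\<in>?P. ?M p)"
  then obtain p m where p: "prime p" "y < real p" and m: "1 \<le> m" "real m \<le> x / real p"
    and n: "n = p * m" by blast
  have "real p > 0" using prime_gt_0_nat[OF p(1)] by simp
  then have "real n \<le> x" using m(2) n by (simp add: field_simps)
  moreover have "1 \<le> n" using n m(1) prime_gt_0_nat[OF p(1)] by simp
  moreover have "\<not> smooth y n" unfolding smooth_def using p n by auto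
  ultimately show "n \<in> ?N" by simp
qed

lemma buchstab:
  assumes x: "x \<ge> 0"
  shows "real (nat \<lfloor>x\<rfloor>) = real (Psi x y) + prime_sum y x (\<lambda>p. real (Psi (x / real p) (real p)))"
proof -
  let ?S = "{n::nat. 1 \<le> n \<and> real n \<le> x \<and> smooth y n}"
  let ?N = "{n::nat. 1 \<le> n \<and> real n \<le> x \<and> \<not> smooth y n}"
  let ?P = "{p::nat. prime p \<and> y < real p \<and> real p \<le> x}"
  let ?M = "\<lambda>p. {m::nat. 1 \<le> m \<and> real m \<le> x / real p \<and> smooth (real p) m}"
  have split: "{1..nat \<lfloor>x\<rfloor>} = ?S \<union> ?N"
    using positive_le_real_eq_atLeastAtMost[of x] by auto
  have "card {1..nat \<lfloor>x\<rfloor>} = card ?S + card ?N"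
    unfolding split by (rule card_Un_disjoint[OF finite_positive_le_real finite_positive_le_real]) auto
  then have "nat \<lfloor>x\<rfloor> = card ?S + card ?N" by simp
  moreover have "card ?N = (\<Sum>p\<in>?P. card ((\<lambda>m. p * m) ` ?M p))"
    unfolding not_smooth_eq_Union
  proof (rule card_UN_disjoint[OF finite_primes_between])
    show "\<forall>p\<in>?P. finite ((\<lambda>m. p * m) ` ?M p)" using finite_positive_le_real by blast
    show "\<forall>p\<in>?P. \<forall>p'\<in>?P. p \<noteq> p' \<longrightarrow> ((\<lambda>m. p * m) ` ?M p) \<inter> ((\<lambda>m. p' * m) ` ?M p') = {}"
      using smooth_largest_prime_factor_unique by blast
  qed
  moreover have "card ((\<lambda>m. p * m) ` ?M p) = Psi (x / real p) (real p)" if "p \<in> ?P" for p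
    using that prime_gt_0_nat unfolding Psi_def by (subst card_image) (auto intro: inj_onI)
  ultimately show ?thesis unfolding Psi_def prime_sum_def by simp
qed

section \<open>The Dickman asymptotics of smooth numbers\<close>

definition Psi_asymp :: "real \<Rightarrow> bool" where
  "Psi_asymp u \<longleftrightarrow> (\<forall>\<epsilon>>0. eventually (\<lambda>x.
      \<bar>real (Psi x (x powr (1 / u))) - dickman_rho u * x\<bar> \<le> \<epsilon> * x) at_top)"

text \<open>\<open>ln z / ln w\<close> is the exponent \<open>u\<close> with \<open>w = z powr (1 / u)\<close>; the approximation is
  uniform in \<open>u \<le> V\<close>.\<close>
definition Psi_uniform_approx :: "real \<Rightarrow> real \<Rightarrow> real \<Rightarrow> bool" where
  "Psi_uniform_approx V \<epsilon> z \<longleftrightarrow> (\<forall>w>1. ln z \<le> V * ln w \<longrightarrow>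
      \<bar>real (Psi z w) - dickman_rho (ln z / ln w) * z\<bar> \<le> \<epsilon> * z)"

definition Psi_asymp_uniform :: "real \<Rightarrow> bool" where
  "Psi_asymp_uniform V \<longleftrightarrow> (\<forall>\<epsilon>>0. eventually (Psi_uniform_approx V \<epsilon>) at_top)"

lemma Psi_approx_if_le:
  assumes "x \<le> y" "1 \<le> \<epsilon> * x" "0 \<le> x"
  shows "\<bar>real (Psi x y) - x\<bar> \<le> \<epsilon> * x"
  using Psi_eq_floor[OF assms(1)] abs_nat_floor_diff_le[OF assms(3)] assms(2) by simp

lemma Psi_asymp_le_1:
  assumes "0 < u" "u \<le> 1"
  shows "Psi_asymp u"
  unfolding Psi_asymp_def
proof (intro allI impI)
  fix \<epsilon> :: real assume \<epsilon>: "\<epsilon> > 0"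
  have "eventually (\<lambda>x. 1 \<le> x \<and> 1 \<le> \<epsilon> * x) at_top"
    using eventually_ge_at_top[of "max 1 (1 / \<epsilon>)"]
    by eventually_elim (use \<epsilon> in \<open>auto simp: field_simps\<close>)
  then show "eventually (\<lambda>x. \<bar>real (Psi x (x powr (1 / u))) - dickman_rho u * x\<bar> \<le> \<epsilon> * x) at_top"
  proof eventually_elim
    case (elim x)
    have "x \<le> x powr (1 / u)"
      using elim assms powr_mono[of 1 "1 / u" x] by simp
    then show ?case using Psi_approx_if_le elim assms dickman_rho_eq_1 by simp
  qed
qed

lemma Psi_asymp_uniform_1: "Psi_asymp_uniform 1"
  unfolding Psi_asymp_uniform_def
proof (intro allI impI)
  fix \<epsilon> :: real assume \<epsilon>: "\<epsilon> > 0"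
  have "eventually (\<lambda>x. 1 \<le> x \<and> 1 \<le> \<epsilon> * x) at_top"
    using eventually_ge_at_top[of "max 1 (1 / \<epsilon>)"]
    by eventually_elim (use \<epsilon> in \<open>auto simp: field_simps\<close>)
  then show "eventually (Psi_uniform_approx 1 \<epsilon>) at_top"
  proof eventually_elim
    case (elim z)
    show ?case
      unfolding Psi_uniform_approx_def
    proof (intro allI impI)
      fix w :: real assume w: "w > 1" "ln z \<le> 1 * ln w"
      then have "z \<le> w" "dickman_rho (ln z / ln w) = 1"
        using elim by (auto intro!: dickman_rho_eq_1 simp: divide_le_eq)
      then show "\<bar>real (Psi z w) - dickman_rho (ln z / ln w) * z\<bar> \<le> \<epsilon> * z"
        using Psi_approx_if_le elim by simp
    qed
  qed
qed

lemma Psi_asymp_imp_dickman_rho_nonneg: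
  assumes "Psi_asymp u"
  shows "0 \<le> dickman_rho u"
proof (rule ccontr)
  assume neg: "\<not> 0 \<le> dickman_rho u"
  then have "- dickman_rho u / 2 > 0" by simp
  then have "eventually (\<lambda>x. \<bar>real (Psi x (x powr (1 / u))) - dickman_rho u * x\<bar>
      \<le> - dickman_rho u / 2 * x) at_top"
    using assms unfolding Psi_asymp_def by blast
  then obtain X where X: "\<And>x. x \<ge> X \<Longrightarrow>
      \<bar>real (Psi x (x powr (1 / u))) - dickman_rho u * x\<bar> \<le> - dickman_rho u / 2 * x"
    unfolding eventually_at_top_linorder by blast
  define x where "x = max X 1"
  have "real (Psi x (x powr (1 / u))) \<le> dickman_rho u / 2 * x"
    using X[of x] by (simp add: x_def abs_le_iff)
  moreover have "dickman_rho u / 2 * x < 0" using neg by (simp add: x_def mult_neg_pos)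
  ultimately show False by simp
qed

lemma ln_quotient_ratio_bounds:
  fixes x y s s' :: real
  assumes x: "x > 1" and s: "0 < s" "s < s'" and y: "x powr (1 / s') < y" "y \<le> x powr (1 / s)"
  shows "s - 1 \<le> ln (x / y) / ln y" and "ln (x / y) / ln y < s' - 1"
proof -
  have "1 < x powr (1 / s')" using powr_less_mono[of 0 "1 / s'" x] x s by simp
  then have y1: "y > 1" using y by linarith
  have "ln (x powr (1 / s')) < ln y" "ln y \<le> ln (x powr (1 / s))"
    using x y y1 by (subst ln_less_cancel_iff ln_le_cancel_iff; auto)+
  then have "ln x / s' < ln y" "ln y \<le> ln x / s"
    using x by (simp_all add: ln_powr)
  moreover have "ln (x / y) / ln y = ln x / ln y - 1" using x y1 by (simp add: ln_div diff_divide_distrib)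
  ultimately show "s - 1 \<le> ln (x / y) / ln y" and "ln (x / y) / ln y < s' - 1"
    using x y1 s by (simp_all add: field_simps)
qed

text \<open>For \<open>p\<close> in \<open>(x powr (1 / s'), x powr (1 / s)]\<close> the count \<open>\<Psi>(x/p, p)\<close> is about \<open>\<rho>(log\<^sub>p(x/p)) x/p\<close>
  with \<open>log\<^sub>p(x/p) \<in> [s - 1, s' - 1)\<close>.  The error term \<open>E p\<close> allows the relative error \<open>\<epsilon>'\<close>
  of the uniform estimate, and covers the primes \<open>p > x / X\<^sub>0\<close>, for which \<open>x/p\<close> is too small
  for that estimate, by the trivial bound \<open>\<Psi>(x/p, p) \<le> x/p\<close>.\<close>
lemma Psi_quotient_bounds:
  fixes x X\<^sub>0 V \<epsilon>' s s' :: real and p :: nat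
  assumes x: "x > 1" and X\<^sub>0: "X\<^sub>0 \<ge> 1" and \<epsilon>': "\<epsilon>' \<ge> 0"
    and unif: "\<And>z. z \<ge> X\<^sub>0 \<Longrightarrow> Psi_uniform_approx V \<epsilon>' z"
    and nonneg: "\<And>v. 0 \<le> v \<Longrightarrow> v \<le> V \<Longrightarrow> 0 \<le> dickman_rho v"
    and s: "1 \<le> s" "s < s'" "s' - 1 \<le> V"
    and p: "prime p" "x powr (1 / s') < real p" "real p \<le> x powr (1 / s)"
  defines "E \<equiv> \<lambda>p::nat. (\<epsilon>' + (if x / X\<^sub>0 < real p then 1 else 0)) * x / real p"
  shows "x * dickman_rho (s' - 1) / real p - E p \<le> real (Psi (x / real p) (real p))"
    and "real (Psi (x / real p) (real p)) \<le> x * dickman_rho (s - 1) / real p + E p"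
proof -
  define v where "v = ln (x / real p) / ln (real p)"
  have p1: "real p > 1" using prime_gt_1_nat[OF p(1)] by simp
  have v: "s - 1 \<le> v" "v < s' - 1"
    using ln_quotient_ratio_bounds[OF x _ s(2) p(2,3)] s unfolding v_def by auto
  have rho_v: "dickman_rho (s' - 1) \<le> dickman_rho v" "dickman_rho v \<le> dickman_rho (s - 1)"
    using v s by (auto intro!: dickman_rho_antimono[OF nonneg])
  have rho_bounds: "0 \<le> dickman_rho (s - 1)" "dickman_rho (s' - 1) \<le> 1"
    using s dickman_rho_bounds[OF nonneg] by auto
  have "0 < x / real p" using x p1 by simp
  have "x * dickman_rho (s' - 1) / real p - E p \<le> real (Psi (x / real p) (real p)) \<and>
      real (Psi (x / real p) (real p)) \<le> x * dickman_rho (s - 1) / real p + E p"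
  proof (cases "x / X\<^sub>0 < real p")
    case True
    have "real (Psi (x / real p) (real p)) \<le> x / real p" using Psi_le x p1 by simp
    moreover have "x * dickman_rho (s' - 1) / real p \<le> x / real p"
      using rho_bounds x p1 by (simp add: divide_right_mono mult_left_le)
    moreover have "0 \<le> x * dickman_rho (s - 1) / real p" "x / real p \<le> E p"
      using rho_bounds x p1 \<epsilon>' True by (simp_all add: E_def divide_right_mono)
    ultimately show ?thesis by simp
  next
    case False
    have "v * ln (real p) \<le> V * ln (real p)" using v s p1 by (intro mult_right_mono) auto
    then have "ln (x / real p) \<le> V * ln (real p)" using p1 by (simp add: v_def)
    moreover have "x / real p \<ge> X\<^sub>0" using False X\<^sub>0 p1 by (simp add: field_simps)
    ultimately have "\<bar>real (Psi (x / real p) (real p)) - dickman_rho v * (x / real p)\<bar> \<le> \<epsilon>' * (x / real p)"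
      using unif p1 unfolding Psi_uniform_approx_def v_def by blast
    moreover have "dickman_rho (s' - 1) * (x / real p) \<le> dickman_rho v * (x / real p)"
      "dickman_rho v * (x / real p) \<le> dickman_rho (s - 1) * (x / real p)"
      using rho_v \<open>0 < x / real p\<close> by (intro mult_right_mono; simp)+
    ultimately show ?thesis using False by (simp add: E_def abs_le_iff algebra_simps)
  qed
  then show "x * dickman_rho (s' - 1) / real p - E p \<le> real (Psi (x / real p) (real p))"
    and "real (Psi (x / real p) (real p)) \<le> x * dickman_rho (s - 1) / real p + E p"
    by auto
qed

lemma prime_sum_Psi_quotient_blocks:
  fixes x u h V X\<^sub>0 \<epsilon>' :: real and K :: nat
  assumes x: "x > 1" and u: "1 < u" "u \<le> V + 1" and K: "K > 0" and h: "h = (u - 1) / real K"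
    and X\<^sub>0: "X\<^sub>0 \<ge> 1" and \<epsilon>': "\<epsilon>' \<ge> 0"
    and unif: "\<And>z. z \<ge> X\<^sub>0 \<Longrightarrow> Psi_uniform_approx V \<epsilon>' z"
    and nonneg: "\<And>v. 0 \<le> v \<Longrightarrow> v \<le> V \<Longrightarrow> 0 \<le> dickman_rho v"
  defines "E \<equiv> \<lambda>p::nat. (\<epsilon>' + (if x / X\<^sub>0 < real p then 1 else 0)) * x / real p"
    and "F \<equiv> \<lambda>p::nat. real (Psi (x / real p) (real p))"
  shows "(\<Sum>j<K. (x * dickman_rho (real (Suc j) * h)) * (h / (1 + real (Suc j) * h) - 8 * u / ln x))
        - prime_sum (x powr (1 / u)) x E \<le> prime_sum (x powr (1 / u)) x F"
    and "prime_sum (x powr (1 / u)) x F \<le> (\<Sum>j<K. (x * dickman_rho (real j * h)) * (h / (1 + real j * h)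
        + 8 * u / ln x)) + prime_sum (x powr (1 / u)) x E"
proof -
  have h0: "h > 0" using u K h by simp
  have in_range: "0 \<le> real j * h" "real j * h \<le> V" if "j \<le> K" for j
  proof -
    have "real j * h \<le> real K * h" using that h0 by (intro mult_right_mono) auto
    then show "0 \<le> real j * h" "real j * h \<le> V" using K h h0 u by auto
  qed
  have coeffs: "0 \<le> x * dickman_rho (real (Suc j) * h) \<and> 0 \<le> x * dickman_rho (real j * h)"
    if "j < K" for j
    using dickman_rho_bounds(1)[OF nonneg in_range[of j]] dickman_rho_bounds(1)[OF nonneg in_range[of "Suc j"]]
      that x by simp
  have bounds: "x * dickman_rho (real (Suc j) * h) / real p - E p \<le> F p \<and>
      F p \<le> x * dickman_rho (real j * h) / real p + E p"
    if j: "j < K" and p: "prime p" "x powr (1 / (1 + real (Suc j) * h)) < real p"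
      "real p \<le> x powr (1 / (1 + real j * h))" for j p
  proof -
    have "1 \<le> 1 + real j * h" "1 + real j * h < 1 + real (Suc j) * h" "(1 + real (Suc j) * h) - 1 \<le> V"
      using h0 in_range[of "Suc j"] j by (auto simp: algebra_simps)
    from Psi_quotient_bounds[OF x X\<^sub>0 \<epsilon>' unif nonneg this p] show ?thesis
      by (simp add: E_def F_def)
  qed
  show "(\<Sum>j<K. (x * dickman_rho (real (Suc j) * h)) * (h / (1 + real (Suc j) * h) - 8 * u / ln x))
        - prime_sum (x powr (1 / u)) x E \<le> prime_sum (x powr (1 / u)) x F"
    and "prime_sum (x powr (1 / u)) x F \<le> (\<Sum>j<K. (x * dickman_rho (real j * h)) * (h / (1 + real j * h)
        + 8 * u / ln x)) + prime_sum (x powr (1 / u)) x E"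
    using prime_sum_blocks_bounds[where c\<^sub>0 = "\<lambda>j. x * dickman_rho (real (Suc j) * h)"
        and c\<^sub>1 = "\<lambda>j. x * dickman_rho (real j * h)" and F = F and G = E, OF x u(1) K h coeffs bounds]
    by simp_all
qed

lemma prime_sum_Psi_quotient_approx:
  fixes x u h V X\<^sub>0 \<epsilon>' :: real and K :: nat
  assumes x: "x > 1" and u: "1 < u" "u \<le> V + 1" and K: "K > 0" and h: "h = (u - 1) / real K"
    and X\<^sub>0: "X\<^sub>0 \<ge> 1" and \<epsilon>': "\<epsilon>' \<ge> 0"
    and unif: "\<And>z. z \<ge> X\<^sub>0 \<Longrightarrow> Psi_uniform_approx V \<epsilon>' z"
    and nonneg: "\<And>v. 0 \<le> v \<Longrightarrow> v \<le> V \<Longrightarrow> 0 \<le> dickman_rho v"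
  defines "E \<equiv> \<lambda>p::nat. (\<epsilon>' + (if x / X\<^sub>0 < real p then 1 else 0)) * x / real p"
  shows "\<bar>prime_sum (x powr (1 / u)) x (\<lambda>p. real (Psi (x / real p) (real p))) - (1 - dickman_rho u) * x\<bar>
    \<le> h * x + 8 * u * real K * x / ln x + prime_sum (x powr (1 / u)) x E"
proof -
  let ?S = "prime_sum (x powr (1 / u)) x"
  let ?F = "\<lambda>p. real (Psi (x / real p) (real p))"
  let ?\<rho> = "\<lambda>j. dickman_rho (real j * h)"
  let ?c = "8 * u / ln x"
  note blocks = prime_sum_Psi_quotient_blocks[OF x u K h X\<^sub>0 \<epsilon>' unif nonneg, folded E_def]
  have c: "0 \<le> x * ?c" using x u by simp
  have rho: "0 \<le> ?\<rho> j" "?\<rho> j \<le> 1" if "j \<le> K" for j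
  proof -
    have "real j * h \<le> real K * h" using that u K h by (intro mult_right_mono) auto
    then show "0 \<le> ?\<rho> j" "?\<rho> j \<le> 1"
      using dickman_rho_bounds[OF nonneg, of "real j * h"] u K h by auto
  qed
  have riemann: "1 - dickman_rho u - h \<le> (\<Sum>j<K. h * (?\<rho> (Suc j) / (1 + real (Suc j) * h)))"
      "(\<Sum>j<K. h * (?\<rho> j / (1 + real j * h))) \<le> 1 - dickman_rho u + h"
    using dickman_rho_riemann_sums[OF u(1) K h] nonneg u by auto
  have "(1 - dickman_rho u) * x - h * x - 8 * u * real K * x / ln x - ?S E
      \<le> x * (\<Sum>j<K. h * (?\<rho> (Suc j) / (1 + real (Suc j) * h))) - real K * (x * ?c) - ?S E"
    using mult_left_mono[OF riemann(1), of x] x by (simp add: algebra_simps)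
  also have "\<dots> = (\<Sum>j<K. x * (h * (?\<rho> (Suc j) / (1 + real (Suc j) * h))) - x * ?c) - ?S E"
    by (simp add: sum_subtractf sum_distrib_left)
  also have "\<dots> \<le> (\<Sum>j<K. (x * ?\<rho> (Suc j)) * (h / (1 + real (Suc j) * h) - ?c)) - ?S E"
  proof (intro diff_right_mono sum_mono)
    fix j assume "j \<in> {..<K}"
    then have "(x * ?c) * ?\<rho> (Suc j) \<le> x * ?c" using rho[of "Suc j"] c by (intro mult_left_le) auto
    then show "x * (h * (?\<rho> (Suc j) / (1 + real (Suc j) * h))) - x * ?c
        \<le> (x * ?\<rho> (Suc j)) * (h / (1 + real (Suc j) * h) - ?c)"
      by (simp add: algebra_simps)
  qed
  also have "\<dots> \<le> ?S ?F" by (rule blocks(1))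
  finally have lower: "(1 - dickman_rho u) * x - h * x - 8 * u * real K * x / ln x - ?S E \<le> ?S ?F" .
  have "?S ?F \<le> (\<Sum>j<K. (x * ?\<rho> j) * (h / (1 + real j * h) + ?c)) + ?S E" by (rule blocks(2))
  also have "\<dots> \<le> (\<Sum>j<K. x * (h * (?\<rho> j / (1 + real j * h))) + x * ?c) + ?S E"
  proof (intro add_right_mono sum_mono)
    fix j assume "j \<in> {..<K}"
    then have "(x * ?c) * ?\<rho> j \<le> x * ?c" using rho[of j] c by (intro mult_left_le) auto
    then show "(x * ?\<rho> j) * (h / (1 + real j * h) + ?c) \<le> x * (h * (?\<rho> j / (1 + real j * h))) + x * ?c"
      by (simp add: algebra_simps)
  qed
  also have "\<dots> = x * (\<Sum>j<K. h * (?\<rho> j / (1 + real j * h))) + real K * (x * ?c) + ?S E"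
    by (simp add: sum.distrib sum_distrib_left)
  also have "\<dots> \<le> (1 - dickman_rho u) * x + h * x + 8 * u * real K * x / ln x + ?S E"
    using mult_left_mono[OF riemann(2), of x] x by (simp add: algebra_simps)
  finally have upper: "?S ?F \<le> (1 - dickman_rho u) * x + h * x + 8 * u * real K * x / ln x + ?S E" .
  from lower upper show ?thesis by (simp add: abs_le_iff)
qed

lemma Psi_powr_approx:
  fixes x u h V X\<^sub>0 \<epsilon>' :: real and K :: nat
  assumes x: "x > 1" and u: "1 < u" "u \<le> V + 1" and K: "K > 0" and h: "h = (u - 1) / real K"
    and X\<^sub>0: "X\<^sub>0 \<ge> 1" and \<epsilon>': "\<epsilon>' \<ge> 0"
    and unif: "\<And>z. z \<ge> X\<^sub>0 \<Longrightarrow> Psi_uniform_approx V \<epsilon>' z"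
    and nonneg: "\<And>v. 0 \<le> v \<Longrightarrow> v \<le> V \<Longrightarrow> 0 \<le> dickman_rho v"
  shows "\<bar>real (Psi x (x powr (1 / u))) - dickman_rho u * x\<bar>
    \<le> 1 + h * x + 8 * u * real K * x / ln x
      + \<epsilon>' * x * prime_sum (x powr (1 / u)) x (\<lambda>p. 1 / real p)
      + x * prime_sum (x / X\<^sub>0) x (\<lambda>p. 1 / real p)"
proof -
  let ?S = "prime_sum (x powr (1 / u)) x"
  have "?S (\<lambda>p. (\<epsilon>' + (if x / X\<^sub>0 < real p then 1 else 0)) * x / real p)
      = \<epsilon>' * x * ?S (\<lambda>p. 1 / real p) + x * ?S (\<lambda>p. if x / X\<^sub>0 < real p then 1 / real p else 0)"
    by (simp add: prime_sum_add[symmetric] prime_sum_cmult[symmetric] distrib_right)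
      (rule prime_sum_cong; simp add: add_divide_distrib)
  also have "?S (\<lambda>p. if x / X\<^sub>0 < real p then 1 / real p else 0) \<le> prime_sum (x / X\<^sub>0) x (\<lambda>p. 1 / real p)"
    by (rule prime_sum_tail_le) simp
  finally have error: "?S (\<lambda>p. (\<epsilon>' + (if x / X\<^sub>0 < real p then 1 else 0)) * x / real p)
      \<le> \<epsilon>' * x * ?S (\<lambda>p. 1 / real p) + x * prime_sum (x / X\<^sub>0) x (\<lambda>p. 1 / real p)"
    using x by (simp add: mult_left_mono)
  have "real (Psi x (x powr (1 / u))) = real (nat \<lfloor>x\<rfloor>) - ?S (\<lambda>p. real (Psi (x / real p) (real p)))"
    using buchstab[of x "x powr (1 / u)"] x by simp
  moreover note prime_sum_Psi_quotient_approx[OF x u K h X\<^sub>0 \<epsilon>' unif nonneg, unfolded abs_le_iff]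
  moreover note abs_nat_floor_diff_le[of x, unfolded abs_le_iff]
  ultimately show ?thesis
    using error x unfolding abs_le_iff by (simp add: algebra_simps)
qed

lemma Psi_asymp_step:
  assumes unif: "Psi_asymp_uniform V"
    and nonneg: "\<And>v. 0 \<le> v \<Longrightarrow> v \<le> V \<Longrightarrow> 0 \<le> dickman_rho v"
    and u: "1 < u" "u \<le> V + 1"
  shows "Psi_asymp u"
  unfolding Psi_asymp_def
proof (intro allI impI)
  fix \<epsilon> :: real assume \<epsilon>: "\<epsilon> > 0"
  obtain K :: nat where K: "10 * (u - 1) / \<epsilon> < real K" using reals_Archimedean2 by blast
  have "0 < 10 * (u - 1) / \<epsilon>" using u \<epsilon> by simp
  then have K0: "K > 0" using K by linarith
  define h where "h = (u - 1) / real K"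
  have h: "h \<le> \<epsilon> / 10" using K K0 \<epsilon> by (simp add: h_def field_simps)
  define \<epsilon>' where "\<epsilon>' = \<epsilon> / (10 * u)"
  have \<epsilon>': "\<epsilon>' > 0" "\<epsilon>' * u = \<epsilon> / 10" using \<epsilon> u by (simp_all add: \<epsilon>'_def)
  obtain X where "\<And>z. z \<ge> X \<Longrightarrow> Psi_uniform_approx V \<epsilon>' z"
    using unif \<epsilon>'(1) unfolding Psi_asymp_uniform_def eventually_at_top_linorder by blast
  then have X: "\<And>z. z \<ge> max X 1 \<Longrightarrow> Psi_uniform_approx V \<epsilon>' z" by simp
  have "eventually (\<lambda>x. 1 < x \<and> 10 / \<epsilon> \<le> x) at_top" by (rule eventually_conj) simp_all
  moreover have "eventually (\<lambda>x. 80 * u * real K / \<epsilon> \<le> ln x) at_top" by (rule eventually_ln_ge)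
  moreover have "eventually (\<lambda>x. prime_sum (x powr (1 / u)) x (\<lambda>p. 1 / real p) \<le> u) at_top"
    using u by (intro eventually_prime_sum_inverse_le) simp
  moreover have "eventually (\<lambda>x. prime_sum (x / max X 1) x (\<lambda>p. 1 / real p) \<le> \<epsilon> / 10) at_top"
    using \<epsilon> by (intro eventually_prime_sum_inverse_tail_le) simp_all
  ultimately show "eventually (\<lambda>x. \<bar>real (Psi x (x powr (1 / u))) - dickman_rho u * x\<bar> \<le> \<epsilon> * x) at_top"
  proof eventually_elim
    case (elim x)
    have "\<epsilon>' * x * prime_sum (x powr (1 / u)) x (\<lambda>p. 1 / real p) \<le> \<epsilon>' * x * u"
      using elim \<epsilon>'(1) by (intro mult_left_mono) auto
    also have "\<epsilon>' * x * u = (\<epsilon>' * u) * x" by (simp add: mult_ac)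
    also have "\<dots> = \<epsilon> * x / 10" using \<epsilon>'(2) by simp
    finally have "\<epsilon>' * x * prime_sum (x powr (1 / u)) x (\<lambda>p. 1 / real p) \<le> \<epsilon> * x / 10" .
    moreover have "1 \<le> \<epsilon> * x / 10" "h * x \<le> \<epsilon> * x / 10" "8 * u * real K * x / ln x \<le> \<epsilon> * x / 10"
      using elim h \<epsilon> u by (auto simp: field_simps intro: mult_right_mono)
    moreover have "x * prime_sum (x / max X 1) x (\<lambda>p. 1 / real p) \<le> \<epsilon> * x / 10"
      using elim mult_left_mono[of _ "\<epsilon> / 10" x] by simp
    moreover have "\<bar>real (Psi x (x powr (1 / u))) - dickman_rho u * x\<bar>
      \<le> 1 + h * x + 8 * u * real K * x / ln x
        + \<epsilon>' * x * prime_sum (x powr (1 / u)) x (\<lambda>p. 1 / real p)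
        + x * prime_sum (x / max X 1) x (\<lambda>p. 1 / real p)"
      by (rule Psi_powr_approx[OF _ u K0 h_def _ _ X nonneg]) (use elim \<epsilon>'(1) in auto)
    ultimately show ?case by linarith
  qed
qed

lemma bracketing_index:
  fixes g :: "nat \<Rightarrow> real"
  assumes "g 0 \<le> v" "v \<le> g (Suc M)"
  shows "\<exists>i\<le>M. g i \<le> v \<and> v \<le> g (Suc i)"
  using assms(2)
proof (induction M)
  case (Suc M)
  show ?case
  proof (cases "g (Suc M) \<le> v")
    case True
    then show ?thesis using Suc.prems by auto
  next
    case False
    then show ?thesis using Suc.IH by (meson le_SucI less_imp_le not_le)
  qed
qed (use assms(1) in auto)

lemma Psi_approx_between:
  assumes z: "z > 1" and w: "w > 1" and s: "0 < s" "s \<le> ln z / ln w" "ln z / ln w \<le> s'"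
    and approx: "\<bar>real (Psi z (z powr (1 / s))) - dickman_rho s * z\<bar> \<le> e * z"
      "\<bar>real (Psi z (z powr (1 / s'))) - dickman_rho s' * z\<bar> \<le> e * z"
    and close: "\<bar>dickman_rho s - dickman_rho (ln z / ln w)\<bar> \<le> e"
      "\<bar>dickman_rho s' - dickman_rho (ln z / ln w)\<bar> \<le> e"
  shows "\<bar>real (Psi z w) - dickman_rho (ln z / ln w) * z\<bar> \<le> 2 * e * z"
proof -
  have lnw: "ln w > 0" using w by simp
  have s'0: "s' > 0" using s by linarith
  have "ln w \<le> ln z / s" "ln z / s' \<le> ln w"
    using s s'0 lnw by (simp_all add: pos_le_divide_eq pos_divide_le_eq mult.commute)
  then have "w \<le> z powr (1 / s)" "z powr (1 / s') \<le> w"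
    using z w by (simp_all add: ln_powr flip: ln_le_cancel_iff)
  then have "Psi z w \<le> Psi z (z powr (1 / s))" "Psi z (z powr (1 / s')) \<le> Psi z w"
    by (simp_all add: Psi_mono)
  moreover have "dickman_rho s * z \<le> (dickman_rho (ln z / ln w) + e) * z"
    "(dickman_rho (ln z / ln w) - e) * z \<le> dickman_rho s' * z"
    using close z by (intro mult_right_mono; simp add: abs_le_iff)+
  ultimately show ?thesis using approx by (simp add: abs_le_iff algebra_simps)
qed

lemma Psi_uniform_approx_from_grid:
  fixes g :: "nat \<Rightarrow> real" and M :: nat
  assumes z: "z > 1" "1 \<le> 2 * e * z"
    and g: "g 0 = 1" "g (Suc M) = V" "\<And>i. i \<le> Suc M \<Longrightarrow> 1 \<le> g i"
    and grid: "\<And>i. i \<le> Suc M \<Longrightarrow> \<bar>real (Psi z (z powr (1 / g i))) - dickman_rho (g i) * z\<bar> \<le> e * z"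
    and close: "\<And>i v. i \<le> M \<Longrightarrow> g i \<le> v \<Longrightarrow> v \<le> g (Suc i) \<Longrightarrow>
      \<bar>dickman_rho (g i) - dickman_rho v\<bar> \<le> e \<and> \<bar>dickman_rho (g (Suc i)) - dickman_rho v\<bar> \<le> e"
  shows "Psi_uniform_approx V (2 * e) z"
  unfolding Psi_uniform_approx_def
proof (intro allI impI)
  fix w :: real assume w: "w > 1" "ln z \<le> V * ln w"
  define v where "v = ln z / ln w"
  have v: "0 \<le> v" "v \<le> V" using z w by (simp_all add: v_def divide_le_eq)
  show "\<bar>real (Psi z w) - dickman_rho (ln z / ln w) * z\<bar> \<le> 2 * e * z"
  proof (cases "v \<le> 1")
    case True
    then have "z \<le> w" using w z by (simp add: v_def divide_le_eq)
    then show ?thesis using True v Psi_approx_if_le[of z w "2 * e"] z dickman_rho_eq_1 by (simp add: v_def)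
  next
    case False
    then obtain i where i: "i \<le> M" "g i \<le> v" "v \<le> g (Suc i)"
      using bracketing_index[of g v M] g v by auto
    then show ?thesis
      using Psi_approx_between[OF z(1) w(1), of "g i" "g (Suc i)" e] grid[of i] grid[of "Suc i"]
        close[OF i] g(3)[of i] by (simp add: v_def)
  qed
qed

text \<open>Uniformity comes from the pointwise asymptotics on a finite grid in \<open>[1, V]\<close>, fine enough
  for the uniform continuity of \<open>\<rho>\<close>.\<close>
lemma Psi_asymp_uniform_if_Psi_asymp:
  assumes V: "V \<ge> 1" and asymp: "\<And>u. 0 < u \<Longrightarrow> u \<le> V \<Longrightarrow> Psi_asymp u"
  shows "Psi_asymp_uniform V"
  unfolding Psi_asymp_uniform_def
proof (intro allI impI)
  fix \<epsilon> :: real assume \<epsilon>: "\<epsilon> > 0"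
  have "uniformly_continuous_on {1..V} dickman_rho"
    by (rule compact_uniformly_continuous) (auto intro: continuous_on_subset[OF continuous_on_dickman_rho])
  then have "\<exists>\<eta>>0. \<forall>a\<in>{1..V}. \<forall>b\<in>{1..V}. \<bar>b - a\<bar> < \<eta> \<longrightarrow>
      \<bar>dickman_rho b - dickman_rho a\<bar> < \<epsilon> / 2"
    using \<epsilon> half_gt_zero unfolding uniformly_continuous_on_def dist_real_def by blast
  then obtain \<eta> where \<eta>: "\<eta> > 0" and unif_cont: "\<forall>a\<in>{1..V}. \<forall>b\<in>{1..V}. \<bar>b - a\<bar> < \<eta> \<longrightarrow>
      \<bar>dickman_rho b - dickman_rho a\<bar> < \<epsilon> / 2"
    by blast
  obtain M :: nat where "(V - 1) / \<eta> < real M" using reals_Archimedean2 by blast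
  then have M: "(V - 1) / \<eta> < real (Suc M)" by simp
  define d where "d = (V - 1) / real (Suc M)"
  define g where "g = (\<lambda>i::nat. 1 + real i * d)"
  have d: "0 \<le> d" "d < \<eta>" using M V \<eta> by (simp_all add: d_def pos_divide_less_eq mult.commute)
  have g_ends: "g 0 = 1" "g (Suc M) = V" by (simp_all add: g_def d_def del: of_nat_Suc)
  have g_range: "g i \<in> {1..V}" if "i \<le> Suc M" for i
  proof -
    have "real i * d \<le> real (Suc M) * d" using that d by (intro mult_right_mono) auto
    moreover have "real (Suc M) * d = V - 1" by (simp add: d_def del: of_nat_Suc)
    ultimately show ?thesis using d by (simp add: g_def)
  qed
  have close: "\<bar>dickman_rho (g i) - dickman_rho v\<bar> \<le> \<epsilon> / 2 \<and> \<bar>dickman_rho (g (Suc i)) - dickman_rho v\<bar> \<le> \<epsilon> / 2"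
    if "i \<le> M" "g i \<le> v" "v \<le> g (Suc i)" for i v
  proof -
    have "g (Suc i) - g i < \<eta>" using d by (simp add: g_def algebra_simps)
    then show ?thesis
      using unif_cont[rule_format, of v "g i"] unif_cont[rule_format, of v "g (Suc i)"]
        g_range[of i] g_range[of "Suc i"] that by (simp add: abs_minus_commute)
  qed
  have "eventually (\<lambda>z. \<forall>i\<in>{..Suc M}.
      \<bar>real (Psi z (z powr (1 / g i))) - dickman_rho (g i) * z\<bar> \<le> \<epsilon> / 2 * z) at_top"
  proof (intro eventually_ball_finite ballI)
    fix i assume "i \<in> {..Suc M}"
    then have "Psi_asymp (g i)" using g_range[of i] by (intro asymp) auto
    then show "eventually (\<lambda>z. \<bar>real (Psi z (z powr (1 / g i))) - dickman_rho (g i) * z\<bar> \<le> \<epsilon> / 2 * z) at_top"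
      using half_gt_zero[OF \<epsilon>] unfolding Psi_asymp_def by blast
  qed simp
  moreover have "eventually (\<lambda>z. 1 < z \<and> 1 \<le> \<epsilon> * z) at_top"
    using eventually_gt_at_top[of "max 1 (1 / \<epsilon>)"] by eventually_elim (use \<epsilon> in \<open>auto simp: field_simps\<close>)
  ultimately show "eventually (Psi_uniform_approx V \<epsilon>) at_top"
  proof eventually_elim
    case (elim z)
    have "Psi_uniform_approx V (2 * (\<epsilon> / 2)) z"
      by (rule Psi_uniform_approx_from_grid[where g = g and M = M])
         (use elim g_ends g_range close in auto)
    then show ?case by simp
  qed
qed

lemma Psi_asymp_upto:
  assumes "Psi_asymp_uniform V" "\<And>v. 0 \<le> v \<Longrightarrow> v \<le> V \<Longrightarrow> 0 \<le> dickman_rho v"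
    and "0 < u" "u \<le> V + 1"
  shows "Psi_asymp u"
  using assms Psi_asymp_le_1[of u] Psi_asymp_step[of V u] by (cases "u \<le> 1") auto

lemma Psi_asymp_uniform_nat:
  "Psi_asymp_uniform (real (Suc N)) \<and> (\<forall>v. 0 \<le> v \<and> v \<le> real (Suc N) \<longrightarrow> 0 \<le> dickman_rho v)"
proof (induction N)
  case 0
  show ?case using Psi_asymp_uniform_1 dickman_rho_eq_1 by simp
next
  case (Suc N)
  then have asymp: "Psi_asymp u" if "0 < u" "u \<le> real (Suc (Suc N))" for u
    using that by (intro Psi_asymp_upto[of "real (Suc N)"]) auto
  have "0 \<le> dickman_rho v" if "0 \<le> v" "v \<le> real (Suc (Suc N))" for v
    using that dickman_rho_eq_1[of 0] asymp[of v] Psi_asymp_imp_dickman_rho_nonneg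
    by (cases "v = 0") auto
  moreover have "Psi_asymp_uniform (real (Suc (Suc N)))"
    by (rule Psi_asymp_uniform_if_Psi_asymp) (use asymp in auto)
  ultimately show ?case by blast
qed

theorem Psi_asymp_pos:
  assumes "u > 0"
  shows "Psi_asymp u"
proof -
  have "u \<le> real (Suc (nat \<lceil>u\<rceil>)) + 1" by linarith
  then show ?thesis
    using Psi_asymp_uniform_nat[of "nat \<lceil>u\<rceil>"] assms by (intro Psi_asymp_upto) auto
qed

section \<open>Smooth numbers as roots of unity modulo a prime\<close>

lemma card_roots_of_unity_mod_prime_le:
  fixes q d :: nat
  assumes q: "prime q" and d: "d > 0"
  shows "card {n::nat. 1 \<le> n \<and> n < q \<and> [n ^ d = 1] (mod q)} \<le> d"
proof -
  interpret R: residues_prime q "residue_ring (int q)"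
    using q by (simp add: residues_prime_def)
  define T where "T = {x \<in> carrier (residue_ring (int q)).
    x [^]\<^bsub>residue_ring (int q)\<^esub> d = \<one>\<^bsub>residue_ring (int q)\<^esub>}"
  have card_T: "card T \<le> d" unfolding T_def by (rule R.num_roots_le_deg) (use d in auto)
  have finite_T: "finite T" unfolding T_def by simp
  have "{n::nat. 1 \<le> n \<and> n < q \<and> [n ^ d = 1] (mod q)} \<subseteq> nat ` T"
  proof
    fix n assume "n \<in> {n::nat. 1 \<le> n \<and> n < q \<and> [n ^ d = 1] (mod q)}"
    then have n: "1 \<le> n" "n < q" "[n ^ d = 1] (mod q)" by auto
    have car: "int n \<in> carrier (residue_ring (int q))" using n by (simp add: R.res_carrier_eq)
    have "int n mod int q = int n" using n by simp
    then have "int n [^]\<^bsub>residue_ring (int q)\<^esub> d = (int n) ^ d mod int q"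
      using R.pow_cong[of "int n" d] by simp
    also have "\<dots> = 1 mod int q"
      using n(3) by (metis cong_def of_nat_1 of_nat_mod of_nat_power)
    also have "\<dots> = \<one>\<^bsub>residue_ring (int q)\<^esub>" using R.one_cong by simp
    finally have "int n \<in> T" unfolding T_def using car by simp
    then show "n \<in> nat ` T" by (metis image_eqI nat_int)
  qed
  then have "card {n::nat. 1 \<le> n \<and> n < q \<and> [n ^ d = 1] (mod q)} \<le> card (nat ` T)"
    using finite_T by (intro card_mono) auto
  also have "\<dots> \<le> card T" using finite_T by (rule card_image_le)
  finally show ?thesis using card_T by simp
qed

lemma cong_pow_eq_1_if_prime_factors:
  fixes q d n :: nat
  assumes "n \<ge> 1" "\<And>p. prime p \<Longrightarrow> p dvd n \<Longrightarrow> [p ^ d = 1] (mod q)"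
  shows "[n ^ d = 1] (mod q)"
  using assms
proof (induction n rule: less_induct)
  case (less n)
  show ?case
  proof (cases "n = 1")
    case False
    then obtain p where p: "prime p" "p dvd n" using prime_factor_nat by blast
    then obtain m where m: "n = p * m" by (elim dvdE)
    have "m \<ge> 1" using m less.prems(1) by (cases m) auto
    moreover have "m < n" using m p prime_gt_1_nat[of p] less.prems(1) by simp
    ultimately have "[m ^ d = 1] (mod q)" using less m by auto
    moreover have "[p ^ d = 1] (mod q)" using less.prems(2) p by blast
    ultimately show ?thesis using m cong_mult by (fastforce simp: power_mult_distrib)
  qed simp
qed

text \<open>Every \<open>y\<close>-smooth \<open>n < q\<close> is a root of \<open>X ^ (d\<^sub>2 - d\<^sub>1) - 1\<close> in the field \<open>\<int>/q\<close>.\<close>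
lemma Psi_le_exponent_diff:
  fixes q d\<^sub>1 d\<^sub>2 :: nat and y :: real
  assumes q: "prime q" and d: "d\<^sub>1 < d\<^sub>2"
    and cong: "\<forall>n::nat. 1 \<le> n \<and> real n \<le> y \<longrightarrow> [n ^ d\<^sub>2 = n ^ d\<^sub>1] (mod q)"
  shows "Psi (real q - 1) y \<le> d\<^sub>2 - d\<^sub>1"
proof -
  let ?d = "d\<^sub>2 - d\<^sub>1"
  have "{n::nat. 1 \<le> n \<and> real n \<le> real q - 1 \<and> smooth y n} \<subseteq> {n. 1 \<le> n \<and> n < q \<and> [n ^ ?d = 1] (mod q)}"
  proof safe
    fix n :: nat assume n: "1 \<le> n" "real n \<le> real q - 1" "smooth y n"
    then show "n < q" by linarith
    show "[n ^ ?d = 1] (mod q)"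
    proof (rule cong_pow_eq_1_if_prime_factors[OF n(1)])
      fix p assume p: "prime p" "p dvd n"
      have "p \<le> n" using p n(1) by (intro dvd_imp_le) auto
      then have "\<not> q dvd p" using p n(2) prime_gt_0_nat[of p] dvd_imp_le[of q p] by linarith
      then have "coprime (p ^ d\<^sub>1) q"
        using prime_imp_coprime[OF q] by (simp add: coprime_commute)
      moreover have "[p ^ d\<^sub>1 * p ^ ?d = p ^ d\<^sub>1 * 1] (mod q)"
        using cong[rule_format, of p] n(3) p d prime_ge_1_nat[of p]
        by (simp add: smooth_def power_add[symmetric])
      ultimately show "[p ^ ?d = 1] (mod q)" using cong_mult_lcancel_nat by blast
    qed
  qed
  then have "Psi (real q - 1) y \<le> card {n. 1 \<le> n \<and> n < q \<and> [n ^ ?d = 1] (mod q)}"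
    unfolding Psi_def by (rule card_mono[rotated]) (rule finite_subset[of _ "{..q}"], auto)
  also have "\<dots> \<le> ?d" using card_roots_of_unity_mod_prime_le[OF q] d by simp
  finally show ?thesis .
qed

lemma eventually_Psi_gt:
  assumes "\<delta> > 0" "c < dickman_rho (1 / \<delta>)"
  shows "eventually (\<lambda>q::nat. c * real q < real (Psi (real q - 1) (real q powr \<delta>))) sequentially"
proof -
  define \<epsilon> where "\<epsilon> = (dickman_rho (1 / \<delta>) - c) / 2"
  have \<epsilon>: "\<epsilon> > 0" using assms by (simp add: \<epsilon>_def)
  have "eventually (\<lambda>x. \<bar>real (Psi x (x powr \<delta>)) - dickman_rho (1 / \<delta>) * x\<bar> \<le> \<epsilon> * x) at_top"
    using Psi_asymp_pos[of "1 / \<delta>"] assms \<epsilon> unfolding Psi_asymp_def by simp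
  moreover have "eventually (\<lambda>x. \<bar>c\<bar> / \<epsilon> < x \<and> 0 \<le> x) at_top"
    by (intro eventually_conj eventually_gt_at_top eventually_ge_at_top)
  ultimately have "eventually (\<lambda>x. c * (x + 1) < real (Psi x (x powr \<delta>))) at_top"
  proof eventually_elim
    case (elim x)
    then have "\<bar>c\<bar> < \<epsilon> * x" using \<epsilon> by (simp add: field_simps)
    moreover have "dickman_rho (1 / \<delta>) * x - \<epsilon> * x = c * x + \<epsilon> * x"
      by (simp add: \<epsilon>_def field_simps)
    ultimately show ?case
      using elim(1) abs_ge_self[of c] unfolding distrib_left abs_le_iff by linarith
  qed
  then obtain X where X: "\<And>x. x \<ge> X \<Longrightarrow> c * (x + 1) < real (Psi x (x powr \<delta>))"
    unfolding eventually_at_top_linorder by blast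
  show ?thesis
    unfolding eventually_sequentially
  proof (intro exI allI impI)
    fix q :: nat assume "nat \<lceil>X\<rceil> + 1 \<le> q"
    then have "X \<le> real q - 1" "real q - 1 \<ge> 0" by linarith+
    then have "c * real q < real (Psi (real q - 1) ((real q - 1) powr \<delta>))" using X by fastforce
    also have "\<dots> \<le> real (Psi (real q - 1) (real q powr \<delta>))"
      using \<open>real q - 1 \<ge> 0\<close> assms(1) by (simp add: Psi_mono powr_mono2)
    finally show "c * real q < real (Psi (real q - 1) (real q powr \<delta>))" .
  qed
qed

theorem mainTheorem8:
  fixes \<delta> c :: real
  assumes "\<delta> > 0" and "0 < c" and "c < dickman_rho (1 / \<delta>)"
  shows "\<exists>q0::nat. \<forall>q::nat. prime q \<and> q \<ge> q0 \<longrightarrow>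
           (\<forall>d1 d2 :: nat. real d1 \<le> real d2 \<and> real d2 \<le> c * real q \<and>
              (\<forall>n::nat. 1 \<le> n \<and> real n \<le> real q powr \<delta> \<longrightarrow> [n ^ d2 = n ^ d1] (mod q))
              \<longrightarrow> d1 = d2)"
proof -
  obtain q0 where q0: "\<And>q. q \<ge> q0 \<Longrightarrow> c * real q < real (Psi (real q - 1) (real q powr \<delta>))"
    using eventually_Psi_gt[OF assms(1,3)] unfolding eventually_sequentially by blast
  show ?thesis
  proof (intro exI[of _ q0] allI impI)
    fix q d1 d2 :: nat
    assume q: "prime q \<and> q0 \<le> q"
      and d: "real d1 \<le> real d2 \<and> real d2 \<le> c * real q \<and>
        (\<forall>n::nat. 1 \<le> n \<and> real n \<le> real q powr \<delta> \<longrightarrow> [n ^ d2 = n ^ d1] (mod q))"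
    show "d1 = d2"
    proof (rule ccontr)
      assume "d1 \<noteq> d2"
      with d have "Psi (real q - 1) (real q powr \<delta>) \<le> d2 - d1"
        using q by (intro Psi_le_exponent_diff) auto
      then show False using q0[of q] q d by linarith
    qed
  qed
qed

end
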